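(* Let $\mathbf{L}\in\{\mathbf{K}_D,\mathbf{KD}_D,\mathbf{KT}_D\}$. Let $\alpha$ be a formula, let $Q\subseteq \mathsf{V}(\alpha)$ be a finite set of propositional variables and $B\subseteq \mathsf{Agt}(\alpha)$ a finite set of agent symbols. (Pre-interpolant.) There exists a formula $I_{pre}$ such that: (1) no variable of $Q$ and no agent of $B$ occurs in $I_{pre}$, i.e. $\mathsf{V}(I_{pre})\cap Q=\emptyset$ and $\mathsf{Agt}(I_{pre})\cap B=\emptyset$; (2) $I_{pre}\Rightarrow\alpha$ is derivable in $\mathsf{G}(\mathbf{L})$; (3) for every formula $\beta$ with $\mathsf{V}(\beta)\cap Q=\emptyset$ and $\mathsf{Agt}(\beta)\cap B=\emptyset$, if $\beta\Rightarrow\alpha$ is derivable in $\mathsf{G}(\mathbf{L})$ then $\beta\Rightarrow I_{pre}$ is derivable in $\mathsf{G}(\mathbf{L})$. (Post-interpolant.) There exists a formula $I_{post}$ such that: (1) $\mathsf{V}(I_{post})\cap Q=\emptyset$ and $\mathsf{Agt}(I_{post})\cap B=\emptyset$; (2) $\alpha\Rightarrow I_{post}$ is derivable in $\mathsf{G}(\mathbf{L})$; (3) for every formula $\beta$ with $\mathsf{V}(\beta)\cap Q=\emptyset$ and $\mathsf{Agt}(\beta)\cap B=\emptyset$, if $\alpha\Rightarrow\beta$ is derivable in $\mathsf{G}(\mathbf{L})$ then $I_{post}\Rightarrow\beta$ is derivable in $\mathsf{G}(\mathbf{L})$.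
   Context: Language: fix a finite nonempty set $\mathsf{Agt}$ of agent symbols and a countable set $\mathsf{Prop}$ of propositional variables; $\mathsf{Grp}$ is the set of nonempty subsets of $\mathsf{Agt}$. Formulas: $\alpha::=p\mid\bot\mid\alpha\wedge\alpha\mid\alpha\vee\alpha\mid\alpha\rightarrow\alpha\mid\neg\alpha\mid D_G\alpha$ with $p\in\mathsf{Prop}$, $G\in\mathsf{Grp}$ ($D_G$ is distributed knowledge of group $G$). $\mathsf{V}(\alpha)$ is the set of propositional variables occurring in $\alpha$; $\mathsf{Agt}(\alpha)$ is the set of agent symbols occurring in $\alpha$ (the union of all $G$ with $D_G$ occurring in $\alpha$); for multisets these are unions. An outmost-boxed formula is one of the form $D_G\gamma$. Sequent calculi: a sequent $\Gamma\Rightarrow\Delta$ is a pair of finite multisets of formulas. $\mathsf{G}(\mathbf{K}_D)$ has initial sequents $\Gamma,p\Rightarrow p,\Delta$ ($p\in\mathsf{Prop}$) and $\bot,\Gamma\Rightarrow\Delta$; the propositional rules: $(R\wedge)$ from $\Gamma\Rightarrow\Delta,\alpha_1$ and $\Gamma\Rightarrow\Delta,\alpha_2$ infer $\Gamma\Rightarrow\Delta,\alpha_1\wedge\alpha_2$; $(L\wedge)$ from $\alpha_1,\alpha_2,\Gamma\Rightarrow\Delta$ infer $\alpha_1\wedge\alpha_2,\Gamma\Rightarrow\Delta$; $(R\vee)$ from $\Gamma\Rightarrow\Delta,\alpha_1,\alpha_2$ infer $\Gamma\Rightarrow\Delta,\alpha_1\vee\alpha_2$; $(L\vee)$ from $\alpha_1,\Gamma\Rightarrow\Delta$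 and $\alpha_2,\Gamma\Rightarrow\Delta$ infer $\alpha_1\vee\alpha_2,\Gamma\Rightarrow\Delta$; $(R\rightarrow)$ from $\alpha_1,\Gamma\Rightarrow\Delta,\alpha_2$ infer $\Gamma\Rightarrow\Delta,\alpha_1\rightarrow\alpha_2$; $(L\rightarrow)$ from $\Gamma\Rightarrow\Delta,\alpha_1$ and $\alpha_2,\Gamma\Rightarrow\Delta$ infer $\alpha_1\rightarrow\alpha_2,\Gamma\Rightarrow\Delta$; $(R\neg)$ from $\alpha,\Gamma\Rightarrow\Delta$ infer $\Gamma\Rightarrow\Delta,\neg\alpha$; $(L\neg)$ from $\Gamma\Rightarrow\Delta,\alpha$ infer $\neg\alpha,\Gamma\Rightarrow\Delta$; and the modal rule $(D_K)$: from $\alpha_1,\dots,\alpha_n\Rightarrow\beta$ ($n\ge 0$) infer $\Sigma,D_{G_1}\alpha_1,\dots,D_{G_n}\alpha_n\Rightarrow D_G\beta,\Omega$, provided $G_i\subseteq G$ for all $i$, $\Sigma$ consists only of propositional variables, $\bot$, and formulas $D_H\gamma$ with $H\not\subseteq G$, and $\Omega$ consists only of propositional variables, $\bot$ and outmost-boxed formulas. $\mathsf{G}(\mathbf{KD}_D)$ adds $(D_D)$: from $\Gamma\Rightarrow$ (empty succedent) with $\Gamma$ nonempty infer $\Sigma,D_{\{a\}}\Gamma\Rightarrow\Omega$ (where $a\in\mathsf{Agt}$, $D_{\{a\}}\Gamma=\{D_{\{a\}}\gamma:\gamma\in\Gamma\}$), provided $\Sigma$ consists only of propositional variables, $\bot$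 and formulas $D_H\gamma$ with $H\neq\{a\}$, and $\Omega$ only of propositional variables, $\bot$ and outmost-boxed formulas. $\mathsf{G}(\mathbf{KT}_D)$ adds to $\mathsf{G}(\mathbf{K}_D)$ the rule $(D_T)$: from $D_G\alpha,\alpha,\Gamma\Rightarrow\Delta$ infer $D_G\alpha,\Gamma\Rightarrow\Delta$. A sequent is derivable if it is the root of a finite tree built from initial sequents by these rules. *)

theory Defs
  imports Main "HOL-Library.Multiset" "HOL-Library.Countable"
begin

text \<open>Agents: a finite (nonempty, as every type) type 'agt. Propositional variables:
a countable type 'p. Groups are nonempty sets of agents; well-formedness of formulas
(all groups nonempty) is expressed by the predicate wf_fm.\<close>

datatype ('p, 'agt) fm =
    Atom 'p
  | Bot
  | Conj "('p, 'agt) fm" "('p, 'agt) fm"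
  | Disj "('p, 'agt) fm" "('p, 'agt) fm"
  | Imp "('p, 'agt) fm" "('p, 'agt) fm"
  | Neg "('p, 'agt) fm"
  | Dk "'agt set" "('p, 'agt) fm"

fun wf_fm :: "('p, 'agt) fm \<Rightarrow> bool" where
  "wf_fm (Atom p) = True"
| "wf_fm Bot = True"
| "wf_fm (Conj a b) = (wf_fm a \<and> wf_fm b)"
| "wf_fm (Disj a b) = (wf_fm a \<and> wf_fm b)"
| "wf_fm (Imp a b) = (wf_fm a \<and> wf_fm b)"
| "wf_fm (Neg a) = wf_fm a"
| "wf_fm (Dk G a) = (G \<noteq> {} \<and> wf_fm a)"

fun vars :: "('p, 'agt) fm \<Rightarrow> 'p set" where
  "vars (Atom p) = {p}"
| "vars Bot = {}"
| "vars (Conj a b) = vars a \<union> vars b"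
| "vars (Disj a b) = vars a \<union> vars b"
| "vars (Imp a b) = vars a \<union> vars b"
| "vars (Neg a) = vars a"
| "vars (Dk G a) = vars a"

fun agts :: "('p, 'agt) fm \<Rightarrow> 'agt set" where
  "agts (Atom p) = {}"
| "agts Bot = {}"
| "agts (Conj a b) = agts a \<union> agts b"
| "agts (Disj a b) = agts a \<union> agts b"
| "agts (Imp a b) = agts a \<union> agts b"
| "agts (Neg a) = agts a"
| "agts (Dk G a) = G \<union> agts a"

fun omega_ok :: "('p, 'agt) fm \<Rightarrow> bool" where
  "omega_ok (Atom p) = True"
| "omega_ok Bot = True"
| "omega_ok (Dk H g) = True"
| "omega_ok _ = False"

fun sigmaK_ok :: "'agt set \<Rightarrow> ('p, 'agt) fm \<Rightarrow> bool" where
  "sigmaK_ok G (Atom p) = True"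
| "sigmaK_ok G Bot = True"
| "sigmaK_ok G (Dk H g) = (\<not> H \<subseteq> G)"
| "sigmaK_ok G _ = False"

fun sigmaD_ok :: "'agt \<Rightarrow> ('p, 'agt) fm \<Rightarrow> bool" where
  "sigmaD_ok a (Atom p) = True"
| "sigmaD_ok a Bot = True"
| "sigmaD_ok a (Dk H g) = (H \<noteq> {a})"
| "sigmaD_ok a _ = False"

datatype logic = LK | LKD | LKT

inductive derivable :: "logic \<Rightarrow> ('p, 'agt) fm multiset \<Rightarrow> ('p, 'agt) fm multiset \<Rightarrow> bool"
  for L :: logic where
  init: "derivable L (add_mset (Atom p) \<Gamma>) (add_mset (Atom p) \<Delta>)"
| botL: "derivable L (add_mset Bot \<Gamma>) \<Delta>"
| conjR: "derivable L \<Gamma> (add_mset a1 \<Delta>) \<Longrightarrow> derivable L \<Gamma> (add_mset a2 \<Delta>) \<Longrightarrow>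
          derivable L \<Gamma> (add_mset (Conj a1 a2) \<Delta>)"
| conjL: "derivable L (add_mset a1 (add_mset a2 \<Gamma>)) \<Delta> \<Longrightarrow>
          derivable L (add_mset (Conj a1 a2) \<Gamma>) \<Delta>"
| disjR: "derivable L \<Gamma> (add_mset a1 (add_mset a2 \<Delta>)) \<Longrightarrow>
          derivable L \<Gamma> (add_mset (Disj a1 a2) \<Delta>)"
| disjL: "derivable L (add_mset a1 \<Gamma>) \<Delta> \<Longrightarrow> derivable L (add_mset a2 \<Gamma>) \<Delta> \<Longrightarrow>
          derivable L (add_mset (Disj a1 a2) \<Gamma>) \<Delta>"
| impR: "derivable L (add_mset a1 \<Gamma>) (add_mset a2 \<Delta>) \<Longrightarrow>
         derivable L \<Gamma> (add_mset (Imp a1 a2) \<Delta>)"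
| impL: "derivable L \<Gamma> (add_mset a1 \<Delta>) \<Longrightarrow> derivable L (add_mset a2 \<Gamma>) \<Delta> \<Longrightarrow>
         derivable L (add_mset (Imp a1 a2) \<Gamma>) \<Delta>"
| negR: "derivable L (add_mset a \<Gamma>) \<Delta> \<Longrightarrow> derivable L \<Gamma> (add_mset (Neg a) \<Delta>)"
| negL: "derivable L \<Gamma> (add_mset a \<Delta>) \<Longrightarrow> derivable L (add_mset (Neg a) \<Gamma>) \<Delta>"
| DK: "derivable L (image_mset snd X) {#b#} \<Longrightarrow>
       (\<forall>x\<in>#X. fst x \<subseteq> G) \<Longrightarrow>
       (\<forall>s\<in>#\<Sigma>. sigmaK_ok G s) \<Longrightarrow> (\<forall>w\<in>#\<Omega>. omega_ok w) \<Longrightarrow>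
       derivable L (\<Sigma> + image_mset (\<lambda>x. Dk (fst x) (snd x)) X) (add_mset (Dk G b) \<Omega>)"
| DD: "L = LKD \<Longrightarrow> derivable L \<Gamma> {#} \<Longrightarrow> \<Gamma> \<noteq> {#} \<Longrightarrow>
       (\<forall>s\<in>#\<Sigma>. sigmaD_ok a s) \<Longrightarrow> (\<forall>w\<in>#\<Omega>. omega_ok w) \<Longrightarrow>
       derivable L (\<Sigma> + image_mset (Dk {a}) \<Gamma>) \<Omega>"
| DT: "L = LKT \<Longrightarrow> derivable L (add_mset (Dk G a) (add_mset a \<Gamma>)) \<Delta> \<Longrightarrow>
       derivable L (add_mset (Dk G a) \<Gamma>) \<Delta>"

end

theory Submission
  imports Defs "HOL-Library.FuncSet"
begin

text \<open>The interpolants are built semantically. Each calculus is sound and complete for Kripke models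
  in which \<open>R\<^sub>G \<subseteq> R\<^sub>H\<close> whenever \<open>H \<subseteq> G\<close> (with serial singleton relations for
  \<open>KD\<^sub>D\<close> and reflexive ones for \<open>KT\<^sub>D\<close>); completeness comes from a canonical model of Hintikka
  pairs, obtained by backward proof search in the cut-free calculus. The post-interpolant of \<open>\<alpha>\<close> is
  the disjunction of the characteristic formulas, of depth \<open>md(\<alpha>)\<close> in the language without \<open>Q\<close>
  and \<open>B\<close>, of the canonical worlds satisfying \<open>\<alpha>\<close>; there are finitely many. If \<open>\<alpha> \<Rightarrow> \<beta>\<close> with
  \<open>\<beta>\<close> in that language and \<open>w\<close> satisfies the disjunction, then \<open>w\<close> is \<open>md(\<alpha>)\<close>-bisimilar, in
  that language, to some \<open>\<alpha>\<close>-world \<open>v\<close>. A product of the model with itself contains a world that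
  agrees with \<open>v\<close> up to depth \<open>md(\<alpha>)\<close> in the full language, hence satisfies \<open>\<alpha>\<close> and so \<open>\<beta>\<close>,
  and is fully bisimilar to \<open>w\<close> in the restricted language; so \<open>w\<close> satisfies \<open>\<beta>\<close>. The
  pre-interpolant of \<open>\<alpha>\<close> is the negated post-interpolant of \<open>\<not>\<alpha>\<close>.\<close>

section \<open>Kripke semantics and soundness\<close>

fun sat :: "('w \<Rightarrow> 'p \<Rightarrow> bool) \<Rightarrow> ('agt set \<Rightarrow> 'w \<Rightarrow> 'w \<Rightarrow> bool) \<Rightarrow> 'w \<Rightarrow> ('p, 'agt) fm \<Rightarrow> bool" where
  "sat V R w (Atom p) = V w p"
| "sat V R w Bot = False"
| "sat V R w (Conj a b) = (sat V R w a \<and> sat V R w b)"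
| "sat V R w (Disj a b) = (sat V R w a \<or> sat V R w b)"
| "sat V R w (Imp a b) = (sat V R w a \<longrightarrow> sat V R w b)"
| "sat V R w (Neg a) = (\<not> sat V R w a)"
| "sat V R w (Dk G a) = (\<forall>v. R G w v \<longrightarrow> sat V R v a)"

definition frame :: "logic \<Rightarrow> 'w set \<Rightarrow> ('agt set \<Rightarrow> 'w \<Rightarrow> 'w \<Rightarrow> bool) \<Rightarrow> bool" where
  "frame L D R \<longleftrightarrow>
     (\<forall>G w v. w \<in> D \<longrightarrow> R G w v \<longrightarrow> v \<in> D) \<and>
     (\<forall>G H w v. w \<in> D \<longrightarrow> H \<subseteq> G \<longrightarrow> H \<noteq> {} \<longrightarrow> R G w v \<longrightarrow> R H w v) \<and>
     (L = LKD \<longrightarrow> (\<forall>a w. w \<in> D \<longrightarrow> (\<exists>v. R {a} w v))) \<and>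
     (L = LKT \<longrightarrow> (\<forall>G w. w \<in> D \<longrightarrow> G \<noteq> {} \<longrightarrow> R G w w))"

lemma frame_closed: "frame L D R \<Longrightarrow> w \<in> D \<Longrightarrow> R G w v \<Longrightarrow> v \<in> D"
  unfolding frame_def by metis

lemma frame_antimono: "frame L D R \<Longrightarrow> w \<in> D \<Longrightarrow> H \<subseteq> G \<Longrightarrow> H \<noteq> {} \<Longrightarrow> R G w v \<Longrightarrow> R H w v"
  unfolding frame_def by metis

lemma frame_serial: "frame LKD D R \<Longrightarrow> w \<in> D \<Longrightarrow> \<exists>v. R {a} w v"
  unfolding frame_def by blast

lemma frame_refl: "frame LKT D R \<Longrightarrow> w \<in> D \<Longrightarrow> G \<noteq> {} \<Longrightarrow> R G w w"
  unfolding frame_def by blast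

definition wf_seq :: "('p, 'agt) fm multiset \<Rightarrow> ('p, 'agt) fm multiset \<Rightarrow> bool" where
  "wf_seq \<Gamma> \<Delta> \<longleftrightarrow> (\<forall>\<phi>\<in>#\<Gamma> + \<Delta>. wf_fm \<phi>)"

definition seq_true :: "('w \<Rightarrow> 'p \<Rightarrow> bool) \<Rightarrow> ('agt set \<Rightarrow> 'w \<Rightarrow> 'w \<Rightarrow> bool) \<Rightarrow> 'w \<Rightarrow>
    ('p, 'agt) fm multiset \<Rightarrow> ('p, 'agt) fm multiset \<Rightarrow> bool" where
  "seq_true V R w \<Gamma> \<Delta> \<longleftrightarrow> (\<forall>\<phi>\<in>#\<Gamma>. sat V R w \<phi>) \<longrightarrow> (\<exists>\<phi>\<in>#\<Delta>. sat V R w \<phi>)"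

theorem soundness:
  assumes "derivable L \<Gamma> \<Delta>" and F: "frame L D R" and "wf_seq \<Gamma> \<Delta>" and "w \<in> D"
  shows "seq_true V R w \<Gamma> \<Delta>"
  using assms(1,3,4)
proof (induction arbitrary: w rule: derivable.induct)
  case (DK X b G \<Sigma> \<Omega>)
  have wf_X: "\<forall>x\<in>#X. fst x \<noteq> {} \<and> wf_fm (snd x)" and "wf_fm b"
    using DK.prems(1) by (simp_all add: wf_seq_def ball_Un)
  show ?case unfolding seq_true_def
  proof
    assume "\<forall>\<phi>\<in>#\<Sigma> + image_mset (\<lambda>x. Dk (fst x) (snd x)) X. sat V R w \<phi>"
    then have boxes: "\<forall>x\<in>#X. sat V R w (Dk (fst x) (snd x))" by (simp add: ball_Un)
    have "sat V R v b" if v: "R G w v" for v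
    proof -
      have "R (fst x) w v" if "x \<in># X" for x
        by (rule frame_antimono[OF F \<open>w \<in> D\<close> _ _ v]) (use DK.hyps(2) wf_X that in auto)
      then have "\<forall>\<phi>\<in>#image_mset snd X. sat V R v \<phi>" using boxes by auto
      moreover have "v \<in> D" using frame_closed[OF F \<open>w \<in> D\<close> v] .
      ultimately show ?thesis using DK.IH wf_X \<open>wf_fm b\<close> by (auto simp: seq_true_def wf_seq_def)
    qed
    then show "\<exists>\<phi>\<in>#add_mset (Dk G b) \<Omega>. sat V R w \<phi>" by simp
  qed
next
  case (DD \<Gamma> \<Sigma> a \<Omega>)
  have "frame LKD D R" using F DD.hyps(1) by simp
  then obtain v where v: "R {a} w v" using frame_serial \<open>w \<in> D\<close> by metis
  have "wf_seq \<Gamma> {#}" using DD.prems(1) by (simp add: wf_seq_def ball_Un)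
  then have "seq_true V R v \<Gamma> {#}" using DD.IH frame_closed[OF F \<open>w \<in> D\<close> v] by simp
  then show ?case using v by (auto simp: seq_true_def ball_Un)
next
  case (DT G a \<Gamma> \<Delta>)
  have "frame LKT D R" using F DT.hyps(1) by simp
  moreover have "G \<noteq> {}" using DT.prems(1) by (simp add: wf_seq_def)
  ultimately have "R G w w" using frame_refl \<open>w \<in> D\<close> by metis
  then show ?case using DT.IH DT.prems by (auto simp: seq_true_def wf_seq_def)
qed (auto simp: seq_true_def wf_seq_def)

section \<open>Backward proof search and Hintikka pairs\<close>

lemma not_derivable_empty: "\<not> derivable L {#} {#}"
  by (auto elim: derivable.cases)

fun is_compound :: "('p, 'agt) fm \<Rightarrow> bool" where
  "is_compound (Conj a b) = True"
| "is_compound (Disj a b) = True"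
| "is_compound (Imp a b) = True"
| "is_compound (Neg a) = True"
| "is_compound _ = False"

fun is_box :: "('p, 'agt) fm \<Rightarrow> bool" where
  "is_box (Dk G a) = True"
| "is_box _ = False"

fun saturated_left :: "('p, 'agt) fm set \<Rightarrow> ('p, 'agt) fm set \<Rightarrow> ('p, 'agt) fm \<Rightarrow> bool" where
  "saturated_left A B (Conj a b) = (a \<in> A \<and> b \<in> A)"
| "saturated_left A B (Disj a b) = (a \<in> A \<or> b \<in> A)"
| "saturated_left A B (Imp a b) = (a \<in> B \<or> b \<in> A)"
| "saturated_left A B (Neg a) = (a \<in> B)"
| "saturated_left A B _ = False"

fun saturated_right :: "('p, 'agt) fm set \<Rightarrow> ('p, 'agt) fm set \<Rightarrow> ('p, 'agt) fm \<Rightarrow> bool" where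
  "saturated_right A B (Conj a b) = (a \<in> B \<or> b \<in> B)"
| "saturated_right A B (Disj a b) = (a \<in> B \<and> b \<in> B)"
| "saturated_right A B (Imp a b) = (a \<in> A \<and> b \<in> B)"
| "saturated_right A B (Neg a) = (a \<in> A)"
| "saturated_right A B _ = False"

lemma saturated_left_mono: "saturated_left A B \<phi> \<Longrightarrow> A \<subseteq> A' \<Longrightarrow> B \<subseteq> B' \<Longrightarrow> saturated_left A' B' \<phi>"
  by (cases \<phi>) auto

lemma saturated_right_mono: "saturated_right A B \<phi> \<Longrightarrow> A \<subseteq> A' \<Longrightarrow> B \<subseteq> B' \<Longrightarrow> saturated_right A' B' \<phi>"
  by (cases \<phi>) auto

text \<open>A Hintikka pair \<open>(A, B)\<close> lists formulas to be made true and false at one world; the modal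
  clauses ask for the underivable premises of \<open>(D\<^sub>K)\<close> and \<open>(D\<^sub>D)\<close> from which successor worlds
  are built.\<close>

definition hintikka :: "logic \<Rightarrow> ('p, 'agt) fm set \<Rightarrow> ('p, 'agt) fm set \<Rightarrow> bool" where
  "hintikka L A B \<longleftrightarrow> (\<forall>\<phi>\<in>A \<union> B. wf_fm \<phi>) \<and> (\<forall>p. Atom p \<in> A \<longrightarrow> Atom p \<notin> B) \<and> Bot \<notin> A \<and>
     (\<forall>\<phi>\<in>A. is_compound \<phi> \<longrightarrow> saturated_left A B \<phi>) \<and>
     (\<forall>\<phi>\<in>B. is_compound \<phi> \<longrightarrow> saturated_right A B \<phi>) \<and>
     (\<forall>G b. Dk G b \<in> B \<longrightarrow> (\<exists>X. set_mset X = {(H, \<gamma>). Dk H \<gamma> \<in> A \<and> H \<subseteq> G} \<and>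
                                  \<not> derivable L (image_mset snd X) {#b#})) \<and>
     (L = LKD \<longrightarrow> (\<forall>a. \<exists>Y. set_mset Y = {\<gamma>. Dk {a} \<gamma> \<in> A} \<and> \<not> derivable L Y {#})) \<and>
     (L = LKT \<longrightarrow> (\<forall>G a. Dk G a \<in> A \<longrightarrow> a \<in> A))"

inductive search_step :: "logic \<Rightarrow> ('p, 'agt) fm multiset \<Rightarrow> ('p, 'agt) fm multiset \<Rightarrow> ('p, 'agt) fm set \<Rightarrow>
    ('p, 'agt) fm multiset \<Rightarrow> ('p, 'agt) fm multiset \<Rightarrow> ('p, 'agt) fm set \<Rightarrow> bool" for L where
  conjL: "search_step L (add_mset (Conj a b) \<Gamma>) \<Delta> U (add_mset a (add_mset b \<Gamma>)) \<Delta> U"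
| disjL1: "search_step L (add_mset (Disj a b) \<Gamma>) \<Delta> U (add_mset a \<Gamma>) \<Delta> U"
| disjL2: "search_step L (add_mset (Disj a b) \<Gamma>) \<Delta> U (add_mset b \<Gamma>) \<Delta> U"
| impL1: "search_step L (add_mset (Imp a b) \<Gamma>) \<Delta> U \<Gamma> (add_mset a \<Delta>) U"
| impL2: "search_step L (add_mset (Imp a b) \<Gamma>) \<Delta> U (add_mset b \<Gamma>) \<Delta> U"
| negL: "search_step L (add_mset (Neg a) \<Gamma>) \<Delta> U \<Gamma> (add_mset a \<Delta>) U"
| conjR1: "search_step L \<Gamma> (add_mset (Conj a b) \<Delta>) U \<Gamma> (add_mset a \<Delta>) U"
| conjR2: "search_step L \<Gamma> (add_mset (Conj a b) \<Delta>) U \<Gamma> (add_mset b \<Delta>) U"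
| disjR: "search_step L \<Gamma> (add_mset (Disj a b) \<Delta>) U \<Gamma> (add_mset a (add_mset b \<Delta>)) U"
| impR: "search_step L \<Gamma> (add_mset (Imp a b) \<Delta>) U (add_mset a \<Gamma>) (add_mset b \<Delta>) U"
| negR: "search_step L \<Gamma> (add_mset (Neg a) \<Delta>) U (add_mset a \<Gamma>) \<Delta> U"
| boxT: "L = LKT \<Longrightarrow> Dk G a \<in># \<Gamma> \<Longrightarrow> Dk G a \<notin> U \<Longrightarrow>
         search_step L \<Gamma> \<Delta> U (add_mset a \<Gamma>) \<Delta> (insert (Dk G a) U)"

definition search_stuck :: "logic \<Rightarrow> ('p, 'agt) fm multiset \<Rightarrow> ('p, 'agt) fm multiset \<Rightarrow> ('p, 'agt) fm set \<Rightarrow> bool" where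
  "search_stuck L \<Gamma> \<Delta> U \<longleftrightarrow>
     (\<forall>\<phi>\<in>#\<Gamma> + \<Delta>. \<not> is_compound \<phi>) \<and> (L = LKT \<longrightarrow> (\<forall>\<phi>\<in>#\<Gamma>. is_box \<phi> \<longrightarrow> \<phi> \<in> U))"

lemma search_step_exists:
  assumes "\<not> derivable L \<Gamma> \<Delta>" and "\<not> search_stuck L \<Gamma> \<Delta> U"
  shows "\<exists>\<Gamma>' \<Delta>' U'. search_step L \<Gamma> \<Delta> U \<Gamma>' \<Delta>' U' \<and> \<not> derivable L \<Gamma>' \<Delta>'"
proof -
  consider (left) \<phi> \<Gamma>0 where "\<Gamma> = add_mset \<phi> \<Gamma>0" "is_compound \<phi>"
    | (right) \<phi> \<Delta>0 where "\<Delta> = add_mset \<phi> \<Delta>0" "is_compound \<phi>"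
    | (box) G a where "L = LKT" "Dk G a \<in># \<Gamma>" "Dk G a \<notin> U"
    using assms(2) unfolding search_stuck_def by (metis is_box.elims(2) multi_member_split union_iff)
  then show ?thesis
  proof cases
    case (left \<phi> \<Gamma>0)
    then show ?thesis
      using assms(1) by (cases \<phi>; simp;
        blast intro: search_step.intros derivable.conjL derivable.disjL derivable.impL derivable.negL)
  next
    case (right \<phi> \<Delta>0)
    then show ?thesis
      using assms(1) by (cases \<phi>; simp;
        blast intro: search_step.intros derivable.conjR derivable.disjR derivable.impR derivable.negR)
  next
    case (box G a)
    then obtain \<Gamma>0 where "\<Gamma> = add_mset (Dk G a) \<Gamma>0" by (metis multi_member_split)
    then have "\<not> derivable L (add_mset a \<Gamma>) \<Delta>"
      using assms(1) derivable.DT[OF \<open>L = LKT\<close>] by (metis add_mset_commute)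
    then show ?thesis using box by (blast intro: search_step.boxT)
  qed
qed

text \<open>Every formula is counted at most once with weight \<open>3 ^ size\<close>: as a compound formula, or as a box
  on the left not yet unfolded by \<open>(D\<^sub>T)\<close>. Replacing a formula by at most two proper subformulas
  therefore decreases the measure, and so does \<open>(D\<^sub>T)\<close>, which keeps the box but records it in \<open>U\<close>.\<close>

definition weight :: "('p, 'agt) fm \<Rightarrow> nat" where
  "weight \<phi> = 3 ^ size \<phi>"

definition compound_weight :: "('p, 'agt) fm \<Rightarrow> nat" where
  "compound_weight \<phi> = (if is_compound \<phi> then weight \<phi> else 0)"

definition box_weight :: "('p, 'agt) fm \<Rightarrow> nat" where
  "box_weight \<phi> = (if is_box \<phi> then weight \<phi> else 0)"

definition search_measure :: "('p, 'agt) fm multiset \<Rightarrow> ('p, 'agt) fm multiset \<Rightarrow> ('p, 'agt) fm set \<Rightarrow> nat" where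
  "search_measure \<Gamma> \<Delta> U = (\<Sum>\<phi>\<in>#\<Gamma> + \<Delta>. compound_weight \<phi>) + (\<Sum>\<phi>\<in>set_mset \<Gamma> - U. box_weight \<phi>)"

lemma compound_weight_plus_box_weight: "compound_weight \<phi> + box_weight \<phi> \<le> weight \<phi>"
  by (cases \<phi>) (auto simp: compound_weight_def box_weight_def)

lemma weight_subformulas:
  "weight a + weight b < weight (Conj a b)" "weight a + weight b < weight (Disj a b)"
  "weight a + weight b < weight (Imp a b)" "weight a < weight (Neg a)" "weight a < weight (Dk G a)"
proof -
  have "(3::nat) ^ x + 3 ^ y < 3 ^ (x + y + 1)" for x y
  proof -
    have "(3::nat) ^ x \<le> 3 ^ (x + y)" "(3::nat) ^ y \<le> 3 ^ (x + y)" "(0::nat) < 3 ^ (x + y)"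
      by (simp_all add: power_increasing)
    moreover have "(3::nat) ^ (x + y + 1) = 3 * 3 ^ (x + y)" by simp
    ultimately show ?thesis by linarith
  qed
  then show "weight a + weight b < weight (Conj a b)" "weight a + weight b < weight (Disj a b)"
    "weight a + weight b < weight (Imp a b)"
    by (simp_all add: weight_def)
qed (simp_all add: weight_def)

lemma search_measure_add_left: "search_measure (add_mset \<phi> \<Gamma>) \<Delta> U \<le> search_measure \<Gamma> \<Delta> U + weight \<phi>"
proof -
  have "(\<Sum>\<psi>\<in>set_mset (add_mset \<phi> \<Gamma>) - U. box_weight \<psi>) \<le> (\<Sum>\<psi>\<in>insert \<phi> (set_mset \<Gamma> - U). box_weight \<psi>)"
    by (rule sum_mono2) auto
  also have "\<dots> \<le> box_weight \<phi> + (\<Sum>\<psi>\<in>set_mset \<Gamma> - U. box_weight \<psi>)"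
    by (simp add: sum.insert_if)
  finally show ?thesis
    using compound_weight_plus_box_weight[of \<phi>] by (simp add: search_measure_def)
qed

lemma search_measure_add_right: "search_measure \<Gamma> (add_mset \<phi> \<Delta>) U \<le> search_measure \<Gamma> \<Delta> U + weight \<phi>"
  using compound_weight_plus_box_weight[of \<phi>] by (simp add: search_measure_def)

lemma search_measure_compound_left:
  "is_compound \<phi> \<Longrightarrow> search_measure \<Gamma> \<Delta> U + weight \<phi> \<le> search_measure (add_mset \<phi> \<Gamma>) \<Delta> U"
  using sum_mono2[of "set_mset (add_mset \<phi> \<Gamma>) - U" "set_mset \<Gamma> - U" box_weight]
  by (auto simp: search_measure_def compound_weight_def)

lemma search_measure_compound_right:
  "is_compound \<phi> \<Longrightarrow> search_measure \<Gamma> \<Delta> U + weight \<phi> \<le> search_measure \<Gamma> (add_mset \<phi> \<Delta>) U"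
  by (simp add: search_measure_def compound_weight_def)

lemma search_measure_unfold_box:
  assumes "Dk G a \<in># \<Gamma>" and "Dk G a \<notin> U"
  shows "search_measure (add_mset a \<Gamma>) \<Delta> (insert (Dk G a) U) + weight (Dk G a)
           \<le> search_measure \<Gamma> \<Delta> U + weight a"
proof -
  let ?S = "set_mset \<Gamma> - U - {Dk G a}" and ?S' = "set_mset (add_mset a \<Gamma>) - insert (Dk G a) U"
  have "(\<Sum>\<psi>\<in>?S'. box_weight \<psi>) \<le> (\<Sum>\<psi>\<in>insert a ?S. box_weight \<psi>)"
    by (rule sum_mono2) auto
  also have "\<dots> \<le> box_weight a + (\<Sum>\<psi>\<in>?S. box_weight \<psi>)"
    by (simp add: sum.insert_if)
  finally have "(\<Sum>\<psi>\<in>?S'. box_weight \<psi>) \<le> box_weight a + (\<Sum>\<psi>\<in>?S. box_weight \<psi>)" .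
  moreover have "(\<Sum>\<psi>\<in>set_mset \<Gamma> - U. box_weight \<psi>) = weight (Dk G a) + (\<Sum>\<psi>\<in>?S. box_weight \<psi>)"
    using assms by (simp add: sum.remove box_weight_def)
  ultimately show ?thesis
    using compound_weight_plus_box_weight[of a] by (simp add: search_measure_def)
qed

lemma search_measure_union_le:
  "search_measure (\<Gamma> + N) (\<Delta> + M) U \<le> search_measure \<Gamma> \<Delta> U + (\<Sum>\<phi>\<in>#N + M. weight \<phi>)"
proof -
  have right: "search_measure \<Gamma> (\<Delta> + M) U \<le> search_measure \<Gamma> \<Delta> U + (\<Sum>\<phi>\<in>#M. weight \<phi>)"
  proof (induction M)
    case (add \<phi> M)
    then show ?case using search_measure_add_right[of \<Gamma> \<phi> "\<Delta> + M" U] by simp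
  qed simp
  have "search_measure (\<Gamma> + N) \<Delta>' U \<le> search_measure \<Gamma> \<Delta>' U + (\<Sum>\<phi>\<in>#N. weight \<phi>)" for \<Delta>'
  proof (induction N)
    case (add \<phi> N)
    then show ?case using search_measure_add_left[of \<phi> "\<Gamma> + N" \<Delta>' U] by simp
  qed simp
  from this[of "\<Delta> + M"] right show ?thesis by simp
qed

lemma search_measure_decompose:
  assumes "is_compound \<phi>" and "(\<Sum>\<psi>\<in>#N + M. weight \<psi>) < weight \<phi>"
  shows "search_measure (\<Gamma> + N) (\<Delta> + M) U < search_measure (add_mset \<phi> \<Gamma>) \<Delta> U"
    and "search_measure (\<Gamma> + N) (\<Delta> + M) U < search_measure \<Gamma> (add_mset \<phi> \<Delta>) U"
  using search_measure_union_le[of \<Gamma> N \<Delta> M U] assms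
    search_measure_compound_left[of \<phi> \<Gamma> \<Delta> U] search_measure_compound_right[of \<phi> \<Gamma> \<Delta> U]
  by simp_all

lemma search_step_measure:
  "search_step L \<Gamma> \<Delta> U \<Gamma>' \<Delta>' U' \<Longrightarrow> search_measure \<Gamma>' \<Delta>' U' < search_measure \<Gamma> \<Delta> U"
proof (induction rule: search_step.induct)
  case (conjL a b \<Gamma> \<Delta> U)
  show ?case using search_measure_decompose(1)[of "Conj a b" "{#a, b#}" "{#}" \<Gamma> \<Delta> U]
      weight_subformulas(1-3)[of a b] by (simp; linarith)
next
  case (disjL1 a b \<Gamma> \<Delta> U)
  show ?case using search_measure_decompose(1)[of "Disj a b" "{#a#}" "{#}" \<Gamma> \<Delta> U]
      weight_subformulas(1-3)[of a b] by (simp; linarith)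
next
  case (disjL2 a b \<Gamma> \<Delta> U)
  show ?case using search_measure_decompose(1)[of "Disj a b" "{#b#}" "{#}" \<Gamma> \<Delta> U]
      weight_subformulas(1-3)[of a b] by (simp; linarith)
next
  case (impL1 a b \<Gamma> \<Delta> U)
  show ?case using search_measure_decompose(1)[of "Imp a b" "{#}" "{#a#}" \<Gamma> \<Delta> U]
      weight_subformulas(1-3)[of a b] by (simp; linarith)
next
  case (impL2 a b \<Gamma> \<Delta> U)
  show ?case using search_measure_decompose(1)[of "Imp a b" "{#b#}" "{#}" \<Gamma> \<Delta> U]
      weight_subformulas(1-3)[of a b] by (simp; linarith)
next
  case (negL a \<Gamma> \<Delta> U)
  show ?case using search_measure_decompose(1)[of "Neg a" "{#}" "{#a#}" \<Gamma> \<Delta> U]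
      weight_subformulas(4)[of a] by (simp; linarith)
next
  case (conjR1 \<Gamma> a b \<Delta> U)
  show ?case using search_measure_decompose(2)[of "Conj a b" "{#}" "{#a#}" \<Gamma> \<Delta> U]
      weight_subformulas(1-3)[of a b] by (simp; linarith)
next
  case (conjR2 \<Gamma> a b \<Delta> U)
  show ?case using search_measure_decompose(2)[of "Conj a b" "{#}" "{#b#}" \<Gamma> \<Delta> U]
      weight_subformulas(1-3)[of a b] by (simp; linarith)
next
  case (disjR \<Gamma> a b \<Delta> U)
  show ?case using search_measure_decompose(2)[of "Disj a b" "{#}" "{#a, b#}" \<Gamma> \<Delta> U]
      weight_subformulas(1-3)[of a b] by (simp; linarith)
next
  case (impR \<Gamma> a b \<Delta> U)
  show ?case using search_measure_decompose(2)[of "Imp a b" "{#a#}" "{#b#}" \<Gamma> \<Delta> U]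
      weight_subformulas(1-3)[of a b] by (simp; linarith)
next
  case (negR \<Gamma> a \<Delta> U)
  show ?case using search_measure_decompose(2)[of "Neg a" "{#a#}" "{#}" \<Gamma> \<Delta> U]
      weight_subformulas(4)[of a] by (simp; linarith)
next
  case (boxT G a \<Gamma> U \<Delta>)
  then show ?case using search_measure_unfold_box[of G a \<Gamma> U \<Delta>] weight_subformulas(5)[of a G] by simp
qed

text \<open>\<open>A\<close> and \<open>B\<close> collect the formulas met on the two sides of the sequent during the search, and
  \<open>U\<close> the boxes already unfolded by \<open>(D\<^sub>T)\<close>.\<close>

definition search_inv :: "('p, 'agt) fm multiset \<Rightarrow> ('p, 'agt) fm multiset \<Rightarrow>
    ('p, 'agt) fm set \<Rightarrow> ('p, 'agt) fm set \<Rightarrow> ('p, 'agt) fm set \<Rightarrow> bool" where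
  "search_inv \<Gamma> \<Delta> A B U \<longleftrightarrow> set_mset \<Gamma> \<subseteq> A \<and> set_mset \<Delta> \<subseteq> B \<and> (\<forall>\<phi>\<in>A \<union> B. wf_fm \<phi>) \<and>
     (\<forall>\<phi>\<in>A. \<phi> \<in># \<Gamma> \<or> is_compound \<phi> \<and> saturated_left A B \<phi>) \<and>
     (\<forall>\<phi>\<in>B. \<phi> \<in># \<Delta> \<or> is_compound \<phi> \<and> saturated_right A B \<phi>) \<and>
     (\<forall>G a. Dk G a \<in> U \<longrightarrow> a \<in> A)"

lemma search_inv_extend:
  assumes inv: "search_inv \<Gamma> \<Delta> A B U"
    and left: "\<forall>\<phi>\<in>#\<Gamma>. \<phi> \<in># \<Gamma>' \<or> is_compound \<phi> \<and> saturated_left (set_mset \<Gamma>') (set_mset \<Delta>') \<phi>"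
    and right: "\<forall>\<phi>\<in>#\<Delta>. \<phi> \<in># \<Delta>' \<or> is_compound \<phi> \<and> saturated_right (set_mset \<Gamma>') (set_mset \<Delta>') \<phi>"
    and "\<forall>\<phi>\<in>#\<Gamma>' + \<Delta>'. wf_fm \<phi>"
    and "\<forall>G a. Dk G a \<in> U' \<longrightarrow> a \<in> A \<union> set_mset \<Gamma>'"
  shows "search_inv \<Gamma>' \<Delta>' (A \<union> set_mset \<Gamma>') (B \<union> set_mset \<Delta>') U'"
proof -
  let ?A = "A \<union> set_mset \<Gamma>'" and ?B = "B \<union> set_mset \<Delta>'"
  have "\<phi> \<in># \<Gamma>' \<or> is_compound \<phi> \<and> saturated_left ?A ?B \<phi>" if "\<phi> \<in> A" for \<phi>
  proof -
    have "\<phi> \<in># \<Gamma> \<or> is_compound \<phi> \<and> saturated_left A B \<phi>"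
      using inv that unfolding search_inv_def by simp
    then show ?thesis
      using left by (auto elim: saturated_left_mono)
  qed
  moreover have "\<phi> \<in># \<Delta>' \<or> is_compound \<phi> \<and> saturated_right ?A ?B \<phi>" if "\<phi> \<in> B" for \<phi>
  proof -
    have "\<phi> \<in># \<Delta> \<or> is_compound \<phi> \<and> saturated_right A B \<phi>"
      using inv that unfolding search_inv_def by simp
    then show ?thesis
      using right by (auto elim: saturated_right_mono)
  qed
  ultimately show ?thesis
    using assms unfolding search_inv_def by auto
qed

lemma search_step_inv:
  assumes "search_step L \<Gamma> \<Delta> U \<Gamma>' \<Delta>' U'" and inv: "search_inv \<Gamma> \<Delta> A B U"
  shows "search_inv \<Gamma>' \<Delta>' (A \<union> set_mset \<Gamma>') (B \<union> set_mset \<Delta>') U'"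
proof -
  have "\<forall>\<phi>\<in>#\<Gamma> + \<Delta>. wf_fm \<phi>" and "\<forall>G a. Dk G a \<in> U \<longrightarrow> a \<in> A"
    using inv unfolding search_inv_def by auto
  with assms(1) show ?thesis
    by cases (rule search_inv_extend[OF inv]; simp_all; (metis UnCI wf_fm.simps(7))?)+
qed

lemma split_boxes:
  "\<exists>\<Sigma> X. \<Gamma> = \<Sigma> + image_mset (\<lambda>x. Dk (fst x) (snd x)) X \<and>
     set_mset X = {(H, \<gamma>). Dk H \<gamma> \<in># \<Gamma> \<and> P H} \<and> (\<forall>\<phi>\<in>#\<Sigma>. \<forall>H \<gamma>. \<phi> = Dk H \<gamma> \<longrightarrow> \<not> P H)"
proof (induction \<Gamma>)
  case empty
  show ?case by (intro exI[of _ "{#}"]) simp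
next
  case (add \<phi> \<Gamma>)
  then obtain \<Sigma> X where "\<Gamma> = \<Sigma> + image_mset (\<lambda>x. Dk (fst x) (snd x)) X"
    and "set_mset X = {(H, \<gamma>). Dk H \<gamma> \<in># \<Gamma> \<and> P H}" and "\<forall>\<phi>\<in>#\<Sigma>. \<forall>H \<gamma>. \<phi> = Dk H \<gamma> \<longrightarrow> \<not> P H"
    by blast
  then show ?case
  proof (cases "\<exists>H \<gamma>. \<phi> = Dk H \<gamma> \<and> P H")
    case True
    then obtain H \<gamma> where "\<phi> = Dk H \<gamma>" "P H" by blast
    with \<open>\<Gamma> = _\<close> \<open>set_mset X = _\<close> \<open>\<forall>\<phi>\<in>#\<Sigma>. _\<close> show ?thesis
      by (intro exI[of _ \<Sigma>] exI[of _ "add_mset (H, \<gamma>) X"]) auto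
  next
    case False
    with \<open>\<Gamma> = _\<close> \<open>set_mset X = _\<close> \<open>\<forall>\<phi>\<in>#\<Sigma>. _\<close> show ?thesis
      by (intro exI[of _ "add_mset \<phi> \<Sigma>"] exI[of _ X]) auto
  qed
qed

lemma omega_ok_if_not_compound: "\<not> is_compound \<phi> \<Longrightarrow> omega_ok \<phi>"
  by (cases \<phi>) auto

lemma underivable_DK_premise:
  assumes nd: "\<not> derivable L \<Gamma> (add_mset (Dk G b) \<Omega>)" and nc: "\<forall>\<phi>\<in>#\<Gamma> + \<Omega>. \<not> is_compound \<phi>"
  shows "\<exists>X. set_mset X = {(H, \<gamma>). Dk H \<gamma> \<in># \<Gamma> \<and> H \<subseteq> G} \<and> \<not> derivable L (image_mset snd X) {#b#}"
proof -
  obtain \<Sigma> X where \<Gamma>: "\<Gamma> = \<Sigma> + image_mset (\<lambda>x. Dk (fst x) (snd x)) X"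
    and X: "set_mset X = {(H, \<gamma>). Dk H \<gamma> \<in># \<Gamma> \<and> H \<subseteq> G}"
    and \<Sigma>: "\<forall>\<phi>\<in>#\<Sigma>. \<forall>H \<gamma>. \<phi> = Dk H \<gamma> \<longrightarrow> \<not> H \<subseteq> G"
    using split_boxes[of \<Gamma> "\<lambda>H. H \<subseteq> G"] by blast
  have "sigmaK_ok G s" if "s \<in># \<Sigma>" for s
  proof -
    have "\<not> is_compound s" using that nc \<Gamma> by simp
    then show ?thesis using that \<Sigma> by (cases s) auto
  qed
  moreover have "\<forall>w\<in>#\<Omega>. omega_ok w" using nc omega_ok_if_not_compound by auto
  moreover have "\<forall>x\<in>#X. fst x \<subseteq> G" using X by auto
  ultimately have "\<not> derivable L (image_mset snd X) {#b#}"
    using nd \<Gamma> derivable.DK[of L X b G \<Sigma> \<Omega>] by auto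
  with X show ?thesis by blast
qed

lemma underivable_DD_premise:
  assumes nd: "\<not> derivable LKD \<Gamma> \<Delta>" and nc: "\<forall>\<phi>\<in>#\<Gamma> + \<Delta>. \<not> is_compound \<phi>"
  shows "\<exists>Y. set_mset Y = {\<gamma>. Dk {a} \<gamma> \<in># \<Gamma>} \<and> \<not> derivable LKD Y {#}"
proof -
  obtain \<Sigma> X where \<Gamma>: "\<Gamma> = \<Sigma> + image_mset (\<lambda>x. Dk (fst x) (snd x)) X"
    and X: "set_mset X = {(H, \<gamma>). Dk H \<gamma> \<in># \<Gamma> \<and> H = {a}}"
    and \<Sigma>: "\<forall>\<phi>\<in>#\<Sigma>. \<forall>H \<gamma>. \<phi> = Dk H \<gamma> \<longrightarrow> H \<noteq> {a}"
    using split_boxes[of \<Gamma> "\<lambda>H. H = {a}"] by blast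
  define Y where "Y = image_mset snd X"
  have "image_mset (\<lambda>x. Dk (fst x) (snd x)) X = image_mset (Dk {a}) Y"
    unfolding Y_def multiset.map_comp using X by (intro image_mset_cong) auto
  then have \<Gamma>Y: "\<Gamma> = \<Sigma> + image_mset (Dk {a}) Y" using \<Gamma> by simp
  have "set_mset Y = {\<gamma>. Dk {a} \<gamma> \<in># \<Gamma>}"
  proof
    show "set_mset Y \<subseteq> {\<gamma>. Dk {a} \<gamma> \<in># \<Gamma>}" using X by (auto simp: Y_def)
    show "{\<gamma>. Dk {a} \<gamma> \<in># \<Gamma>} \<subseteq> set_mset Y"
    proof
      fix \<gamma> assume "\<gamma> \<in> {\<gamma>. Dk {a} \<gamma> \<in># \<Gamma>}"
      then have "({a}, \<gamma>) \<in># X" using X by simp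
      then show "\<gamma> \<in># Y" unfolding Y_def by force
    qed
  qed
  moreover have "\<not> derivable LKD Y {#}"
  proof
    assume der: "derivable LKD Y {#}"
    then have "Y \<noteq> {#}" using not_derivable_empty by blast
    moreover have "sigmaD_ok a s" if "s \<in># \<Sigma>" for s
    proof -
      have "\<not> is_compound s" using that nc \<Gamma> by simp
      then show ?thesis using that \<Sigma> by (cases s) auto
    qed
    moreover have "\<forall>w\<in>#\<Delta>. omega_ok w" using nc omega_ok_if_not_compound by auto
    ultimately show False
      using nd \<Gamma>Y derivable.DD[OF refl der] by auto
  qed
  ultimately show ?thesis by blast
qed

lemma search_stuck_hintikka:
  assumes nd: "\<not> derivable L \<Gamma> \<Delta>" and inv: "search_inv \<Gamma> \<Delta> A B U" and stuck: "search_stuck L \<Gamma> \<Delta> U"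
  shows "hintikka L A B"
proof -
  have nc: "\<forall>\<phi>\<in>#\<Gamma> + \<Delta>. \<not> is_compound \<phi>"
    using stuck unfolding search_stuck_def by simp
  have A: "\<phi> \<in> A \<longleftrightarrow> \<phi> \<in># \<Gamma>" if "\<not> is_compound \<phi>" for \<phi>
    using inv that unfolding search_inv_def by auto
  have B: "\<phi> \<in> B \<longleftrightarrow> \<phi> \<in># \<Delta>" if "\<not> is_compound \<phi>" for \<phi>
    using inv that unfolding search_inv_def by auto
  have left: "\<forall>\<phi>\<in>A. is_compound \<phi> \<longrightarrow> saturated_left A B \<phi>"
    and right: "\<forall>\<phi>\<in>B. is_compound \<phi> \<longrightarrow> saturated_right A B \<phi>"
    using inv nc unfolding search_inv_def by auto
  have atoms: "Atom p \<notin> B" if "Atom p \<in> A" for p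
  proof
    assume "Atom p \<in> B"
    then have "Atom p \<in># \<Gamma>" "Atom p \<in># \<Delta>" using A[of "Atom p"] B[of "Atom p"] that by simp_all
    then obtain \<Gamma>0 \<Delta>0 where "\<Gamma> = add_mset (Atom p) \<Gamma>0" "\<Delta> = add_mset (Atom p) \<Delta>0"
      by (metis multi_member_split)
    then show False using nd derivable.init by metis
  qed
  have bot: "Bot \<notin> A"
  proof
    assume "Bot \<in> A"
    then obtain \<Gamma>0 where "\<Gamma> = add_mset Bot \<Gamma>0" using A[of Bot] by (metis is_compound.simps multi_member_split)
    then show False using nd derivable.botL by metis
  qed
  have K: "\<exists>X. set_mset X = {(H, \<gamma>). Dk H \<gamma> \<in> A \<and> H \<subseteq> G} \<and> \<not> derivable L (image_mset snd X) {#b#}"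
    if "Dk G b \<in> B" for G b
  proof -
    have "Dk G b \<in># \<Delta>" using that B[of "Dk G b"] by simp
    then obtain \<Omega> where "\<Delta> = add_mset (Dk G b) \<Omega>" by (metis multi_member_split)
    then show ?thesis
      using underivable_DK_premise[of L \<Gamma> G b \<Omega>] nd nc A[of "Dk _ _"] by simp
  qed
  have D: "\<exists>Y. set_mset Y = {\<gamma>. Dk {a} \<gamma> \<in> A} \<and> \<not> derivable L Y {#}" if "L = LKD" for a
    using underivable_DD_premise[of \<Gamma> \<Delta> a] that nd nc A[of "Dk _ _"] by simp
  have T: "a \<in> A" if "L = LKT" "Dk G a \<in> A" for G a
    using inv stuck that A[of "Dk G a"] unfolding search_inv_def search_stuck_def by auto
  have wf: "\<forall>\<phi>\<in>A \<union> B. wf_fm \<phi>" using inv unfolding search_inv_def by simp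
  show ?thesis
    unfolding hintikka_def by (intro conjI allI impI; use wf left right atoms bot K D T in simp)
qed

lemma search_inv_hintikka:
  "\<not> derivable L \<Gamma> \<Delta> \<Longrightarrow> search_inv \<Gamma> \<Delta> A B U \<Longrightarrow> \<exists>A' B'. hintikka L A' B' \<and> A \<subseteq> A' \<and> B \<subseteq> B'"
proof (induction "search_measure \<Gamma> \<Delta> U" arbitrary: \<Gamma> \<Delta> A B U rule: less_induct)
  case less
  show ?case
  proof (cases "search_stuck L \<Gamma> \<Delta> U")
    case True
    then show ?thesis using search_stuck_hintikka less.prems by blast
  next
    case False
    then obtain \<Gamma>' \<Delta>' U' where step: "search_step L \<Gamma> \<Delta> U \<Gamma>' \<Delta>' U'" and "\<not> derivable L \<Gamma>' \<Delta>'"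
      using search_step_exists less.prems(1) by blast
    then show ?thesis
      using less.hyps[OF search_step_measure[OF step]] search_step_inv[OF step less.prems(2)] by blast
  qed
qed

theorem hintikka_extension:
  assumes "\<not> derivable L \<Gamma> \<Delta>" and "wf_seq \<Gamma> \<Delta>"
  shows "\<exists>A B. hintikka L A B \<and> set_mset \<Gamma> \<subseteq> A \<and> set_mset \<Delta> \<subseteq> B"
proof -
  have "search_inv \<Gamma> \<Delta> (set_mset \<Gamma>) (set_mset \<Delta>) {}"
    using assms(2) by (auto simp: search_inv_def wf_seq_def)
  then show ?thesis using search_inv_hintikka assms(1) by blast
qed

section \<open>The canonical model\<close>

definition canon_worlds :: "logic \<Rightarrow> (('p, 'agt) fm set \<times> ('p, 'agt) fm set) set" where
  "canon_worlds L = {(A, B). hintikka L A B}"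

definition canon_rel :: "logic \<Rightarrow> 'agt set \<Rightarrow> ('p, 'agt) fm set \<times> ('p, 'agt) fm set \<Rightarrow>
    ('p, 'agt) fm set \<times> ('p, 'agt) fm set \<Rightarrow> bool" where
  "canon_rel L G w v \<longleftrightarrow> hintikka L (fst v) (snd v) \<and> (\<forall>H \<gamma>. Dk H \<gamma> \<in> fst w \<and> H \<subseteq> G \<longrightarrow> \<gamma> \<in> fst v)"

definition canon_val :: "('p, 'agt) fm set \<times> ('p, 'agt) fm set \<Rightarrow> 'p \<Rightarrow> bool" where
  "canon_val w p \<longleftrightarrow> Atom p \<in> fst w"

abbreviation canon_sat :: "logic \<Rightarrow> ('p, 'agt) fm set \<times> ('p, 'agt) fm set \<Rightarrow> ('p, 'agt) fm \<Rightarrow> bool" where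
  "canon_sat L \<equiv> sat canon_val (canon_rel L)"

lemma hintikkaD:
  assumes "hintikka L A B"
  shows "\<forall>\<phi>\<in>A \<union> B. wf_fm \<phi>" "\<forall>p. Atom p \<in> A \<longrightarrow> Atom p \<notin> B" "Bot \<notin> A"
    "\<forall>\<phi>\<in>A. is_compound \<phi> \<longrightarrow> saturated_left A B \<phi>"
    "\<forall>\<phi>\<in>B. is_compound \<phi> \<longrightarrow> saturated_right A B \<phi>"
    "\<forall>G b. Dk G b \<in> B \<longrightarrow> (\<exists>X. set_mset X = {(H, \<gamma>). Dk H \<gamma> \<in> A \<and> H \<subseteq> G} \<and>
                                  \<not> derivable L (image_mset snd X) {#b#})"
    "L = LKD \<Longrightarrow> \<exists>Y. set_mset Y = {\<gamma>. Dk {i} \<gamma> \<in> A} \<and> \<not> derivable L Y {#}"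
    "L = LKT \<Longrightarrow> Dk G a \<in> A \<Longrightarrow> a \<in> A"
  using assms unfolding hintikka_def by simp_all

lemma hintikka_wf: "hintikka L A B \<Longrightarrow> \<phi> \<in> A \<or> \<phi> \<in> B \<Longrightarrow> wf_fm \<phi>"
  using hintikkaD(1) by blast

lemma canon_successor:
  assumes h: "hintikka L A B" and "Dk G b \<in> B"
  shows "\<exists>A' B'. canon_rel L G (A, B) (A', B') \<and> b \<in> B'"
proof -
  obtain X where X: "set_mset X = {(H, \<gamma>). Dk H \<gamma> \<in> A \<and> H \<subseteq> G}"
    and nd: "\<not> derivable L (image_mset snd X) {#b#}"
    using hintikkaD(6)[OF h] \<open>Dk G b \<in> B\<close> by blast
  have "wf_seq (image_mset snd X) {#b#}"
    using X hintikka_wf[OF h] \<open>Dk G b \<in> B\<close> by (fastforce simp: wf_seq_def)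
  then obtain A' B' where "hintikka L A' B'" "snd ` set_mset X \<subseteq> A'" "b \<in> B'"
    using hintikka_extension[OF nd] by auto
  moreover have "\<gamma> \<in> snd ` set_mset X" if "Dk H \<gamma> \<in> A" "H \<subseteq> G" for H \<gamma>
    using that X by (auto intro: image_eqI[where x = "(H, \<gamma>)"])
  ultimately have "canon_rel L G (A, B) (A', B')" unfolding canon_rel_def by auto
  with \<open>b \<in> B'\<close> show ?thesis by blast
qed

lemma canon_serial:
  assumes h: "hintikka LKD A B"
  shows "\<exists>v. canon_rel LKD {a} (A, B) v"
proof -
  obtain Y where Y: "set_mset Y = {\<gamma>. Dk {a} \<gamma> \<in> A}" and nd: "\<not> derivable LKD Y {#}"
    using hintikkaD(7)[OF h] by blast
  have "wf_seq Y {#}"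
    using Y hintikka_wf[OF h] by (fastforce simp: wf_seq_def)
  then obtain A' B' where "hintikka LKD A' B'" "set_mset Y \<subseteq> A'"
    using hintikka_extension[OF nd] by auto
  moreover have "H = {a}" if "Dk H \<gamma> \<in> A" "H \<subseteq> {a}" for H \<gamma>
    using that hintikka_wf[OF h, of "Dk H \<gamma>"] by auto
  ultimately have "canon_rel LKD {a} (A, B) (A', B')"
    using Y unfolding canon_rel_def by auto
  then show ?thesis by blast
qed

lemma frame_canon: "frame L (canon_worlds L) (canon_rel L)"
  unfolding frame_def
proof (intro conjI allI impI)
  fix G H :: "'agt set" and w v :: "('p, 'agt) fm set \<times> ('p, 'agt) fm set"
  show "canon_rel L G w v \<Longrightarrow> v \<in> canon_worlds L"
    unfolding canon_rel_def canon_worlds_def by auto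
  show "H \<subseteq> G \<Longrightarrow> canon_rel L G w v \<Longrightarrow> canon_rel L H w v"
    unfolding canon_rel_def by (meson order_trans)
next
  fix a and w :: "('p, 'agt) fm set \<times> ('p, 'agt) fm set"
  assume "L = LKD" "w \<in> canon_worlds L"
  then show "\<exists>v. canon_rel L {a} w v"
    using canon_serial unfolding canon_worlds_def by auto
next
  fix G and w :: "('p, 'agt) fm set \<times> ('p, 'agt) fm set"
  assume "L = LKT" "w \<in> canon_worlds L"
  then show "canon_rel L G w w"
    using hintikkaD(8) unfolding canon_rel_def canon_worlds_def by auto
qed

lemma hintikka_saturated_left: "hintikka L A B \<Longrightarrow> \<phi> \<in> A \<Longrightarrow> is_compound \<phi> \<Longrightarrow> saturated_left A B \<phi>"
  using hintikkaD(4) by blast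

lemma hintikka_saturated_right: "hintikka L A B \<Longrightarrow> \<phi> \<in> B \<Longrightarrow> is_compound \<phi> \<Longrightarrow> saturated_right A B \<phi>"
  using hintikkaD(5) by blast

theorem canon_truth:
  "hintikka L A B \<Longrightarrow> (\<phi> \<in> A \<longrightarrow> canon_sat L (A, B) \<phi>) \<and> (\<phi> \<in> B \<longrightarrow> \<not> canon_sat L (A, B) \<phi>)"
proof (induction \<phi> arbitrary: A B)
  case (Atom p)
  then show ?case using hintikkaD(2) unfolding canon_val_def by auto
next
  case Bot
  then show ?case using hintikkaD(3) by auto
next
  case (Dk G b)
  have "canon_sat L (A, B) (Dk G b)" if "Dk G b \<in> A"
    using that Dk.IH unfolding canon_rel_def by fastforce
  moreover have "\<not> canon_sat L (A, B) (Dk G b)" if "Dk G b \<in> B"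
    using canon_successor[OF Dk.prems that] Dk.IH unfolding canon_rel_def by fastforce
  ultimately show ?case by blast
qed (use hintikka_saturated_left hintikka_saturated_right in fastforce)+

theorem derivable_iff_canon_valid:
  assumes "wf_fm a" and "wf_fm b"
  shows "derivable L {#a#} {#b#} \<longleftrightarrow> (\<forall>w\<in>canon_worlds L. canon_sat L w a \<longrightarrow> canon_sat L w b)"
proof
  assume der: "derivable L {#a#} {#b#}"
  show "\<forall>w\<in>canon_worlds L. canon_sat L w a \<longrightarrow> canon_sat L w b"
  proof (intro ballI impI)
    fix w assume "w \<in> canon_worlds L" and "canon_sat L w a"
    moreover have "seq_true canon_val (canon_rel L) w {#a#} {#b#}"
      by (rule soundness[OF der frame_canon]) (use assms \<open>w \<in> canon_worlds L\<close> in \<open>simp_all add: wf_seq_def\<close>)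
    ultimately show "canon_sat L w b" by (simp add: seq_true_def)
  qed
next
  assume valid: "\<forall>w\<in>canon_worlds L. canon_sat L w a \<longrightarrow> canon_sat L w b"
  show "derivable L {#a#} {#b#}"
  proof (rule ccontr)
    assume "\<not> derivable L {#a#} {#b#}"
    moreover have "wf_seq {#a#} {#b#}" using assms by (simp add: wf_seq_def)
    ultimately obtain A B where "hintikka L A B" "a \<in> A" "b \<in> B"
      using hintikka_extension[of L "{#a#}" "{#b#}"] by auto
    then have "(A, B) \<in> canon_worlds L" "canon_sat L (A, B) a" "\<not> canon_sat L (A, B) b"
      using canon_truth[of L A B a] canon_truth[of L A B b] by (simp_all add: canon_worlds_def)
    then show False using valid by blast
  qed
qed

section \<open>Bounded bisimulation and characteristic formulas\<close>

fun groups :: "('p, 'agt) fm \<Rightarrow> 'agt set set" where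
  "groups (Atom p) = {}"
| "groups Bot = {}"
| "groups (Conj a b) = groups a \<union> groups b"
| "groups (Disj a b) = groups a \<union> groups b"
| "groups (Imp a b) = groups a \<union> groups b"
| "groups (Neg a) = groups a"
| "groups (Dk G a) = insert G (groups a)"

fun modal_depth :: "('p, 'agt) fm \<Rightarrow> nat" where
  "modal_depth (Atom p) = 0"
| "modal_depth Bot = 0"
| "modal_depth (Conj a b) = max (modal_depth a) (modal_depth b)"
| "modal_depth (Disj a b) = max (modal_depth a) (modal_depth b)"
| "modal_depth (Imp a b) = max (modal_depth a) (modal_depth b)"
| "modal_depth (Neg a) = modal_depth a"
| "modal_depth (Dk G a) = Suc (modal_depth a)"

lemma agts_eq_Union_groups: "agts \<phi> = \<Union> (groups \<phi>)"
  by (induction \<phi>) auto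

lemma wf_fm_groups_nonempty: "wf_fm \<phi> \<Longrightarrow> G \<in> groups \<phi> \<Longrightarrow> G \<noteq> {}"
  by (induction \<phi>) auto

lemma finite_vars: "finite (vars \<phi>)"
  by (induction \<phi>) auto

fun bisim_upto :: "'p set \<Rightarrow> 'agt set set \<Rightarrow> nat \<Rightarrow> ('a \<Rightarrow> 'p \<Rightarrow> bool) \<Rightarrow> ('agt set \<Rightarrow> 'a \<Rightarrow> 'a \<Rightarrow> bool) \<Rightarrow> 'a \<Rightarrow>
    ('b \<Rightarrow> 'p \<Rightarrow> bool) \<Rightarrow> ('agt set \<Rightarrow> 'b \<Rightarrow> 'b \<Rightarrow> bool) \<Rightarrow> 'b \<Rightarrow> bool" where
  "bisim_upto Vs Gs 0 V1 R1 x V2 R2 y = (\<forall>p\<in>Vs. V1 x p = V2 y p)"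
| "bisim_upto Vs Gs (Suc n) V1 R1 x V2 R2 y = ((\<forall>p\<in>Vs. V1 x p = V2 y p) \<and>
     (\<forall>G\<in>Gs. (\<forall>x'. R1 G x x' \<longrightarrow> (\<exists>y'. R2 G y y' \<and> bisim_upto Vs Gs n V1 R1 x' V2 R2 y')) \<and>
              (\<forall>y'. R2 G y y' \<longrightarrow> (\<exists>x'. R1 G x x' \<and> bisim_upto Vs Gs n V1 R1 x' V2 R2 y'))))"

lemma bisim_upto_val: "bisim_upto Vs Gs n V1 R1 x V2 R2 y \<Longrightarrow> p \<in> Vs \<Longrightarrow> V1 x p = V2 y p"
  by (cases n) auto

lemma bisim_upto_sym: "bisim_upto Vs Gs n V1 R1 x V2 R2 y \<Longrightarrow> bisim_upto Vs Gs n V2 R2 y V1 R1 x"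
proof (induction n arbitrary: x y)
  case (Suc n)
  from Suc.prems show ?case
    by (simp only: bisim_upto.simps) (use Suc.IH in blast)
qed simp

lemma bisim_upto_refl: "bisim_upto Vs Gs n V R x V R x"
  by (induction n arbitrary: x) auto

theorem sat_bisim_upto_invariant:
  "bisim_upto Vs Gs n V1 R1 x V2 R2 y \<Longrightarrow> vars \<phi> \<subseteq> Vs \<Longrightarrow> groups \<phi> \<subseteq> Gs \<Longrightarrow> modal_depth \<phi> \<le> n \<Longrightarrow>
   sat V1 R1 x \<phi> = sat V2 R2 y \<phi>"
proof (induction \<phi> arbitrary: n x y)
  case (Atom p)
  then show ?case using bisim_upto_val by fastforce
next
  case (Dk G a)
  obtain m where n: "n = Suc m" and "modal_depth a \<le> m"
    using Dk.prems(4) by (cases n) auto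
  then have IH: "bisim_upto Vs Gs m V1 R1 x' V2 R2 y' \<Longrightarrow> sat V1 R1 x' a = sat V2 R2 y' a" for x' y'
    using Dk.IH Dk.prems(2,3) by simp
  have "\<forall>x'. R1 G x x' \<longrightarrow> (\<exists>y'. R2 G y y' \<and> bisim_upto Vs Gs m V1 R1 x' V2 R2 y')"
    and "\<forall>y'. R2 G y y' \<longrightarrow> (\<exists>x'. R1 G x x' \<and> bisim_upto Vs Gs m V1 R1 x' V2 R2 y')"
    using Dk.prems(1,3) n by auto
  then show ?case using IH by (simp (no_asm_use)) metis
qed simp_all

text \<open>\<open>SOME\<close> picks an enumeration of \<open>S\<close>; for infinite \<open>S\<close> the result is junk.\<close>

definition Conjs :: "('p, 'agt) fm set \<Rightarrow> ('p, 'agt) fm" where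
  "Conjs S = foldr Conj (SOME xs. set xs = S) (Neg Bot)"

definition Disjs :: "('p, 'agt) fm set \<Rightarrow> ('p, 'agt) fm" where
  "Disjs S = foldr Disj (SOME xs. set xs = S) Bot"

lemma Conjs_simps:
  assumes "finite S"
  shows "sat V R w (Conjs S) = (\<forall>\<phi>\<in>S. sat V R w \<phi>)" "wf_fm (Conjs S) = (\<forall>\<phi>\<in>S. wf_fm \<phi>)"
    "vars (Conjs S) = \<Union> (vars ` S)" "groups (Conjs S) = \<Union> (groups ` S)"
proof -
  have "set (SOME xs. set xs = S) = S" by (rule someI_ex) (rule finite_list[OF assms])
  moreover have "sat V R w (foldr Conj xs (Neg Bot)) = (\<forall>\<phi>\<in>set xs. sat V R w \<phi>) \<and>
      wf_fm (foldr Conj xs (Neg Bot)) = (\<forall>\<phi>\<in>set xs. wf_fm \<phi>) \<and>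
      vars (foldr Conj xs (Neg Bot)) = \<Union> (vars ` set xs) \<and>
      groups (foldr Conj xs (Neg Bot)) = \<Union> (groups ` set xs)" for xs
    by (induction xs) auto
  ultimately show "sat V R w (Conjs S) = (\<forall>\<phi>\<in>S. sat V R w \<phi>)" "wf_fm (Conjs S) = (\<forall>\<phi>\<in>S. wf_fm \<phi>)"
    "vars (Conjs S) = \<Union> (vars ` S)" "groups (Conjs S) = \<Union> (groups ` S)"
    unfolding Conjs_def by metis+
qed

lemma Disjs_simps:
  assumes "finite S"
  shows "sat V R w (Disjs S) = (\<exists>\<phi>\<in>S. sat V R w \<phi>)" "wf_fm (Disjs S) = (\<forall>\<phi>\<in>S. wf_fm \<phi>)"
    "vars (Disjs S) = \<Union> (vars ` S)" "groups (Disjs S) = \<Union> (groups ` S)"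
proof -
  have "set (SOME xs. set xs = S) = S" by (rule someI_ex) (rule finite_list[OF assms])
  moreover have "sat V R w (foldr Disj xs Bot) = (\<exists>\<phi>\<in>set xs. sat V R w \<phi>) \<and>
      wf_fm (foldr Disj xs Bot) = (\<forall>\<phi>\<in>set xs. wf_fm \<phi>) \<and>
      vars (foldr Disj xs Bot) = \<Union> (vars ` set xs) \<and>
      groups (foldr Disj xs Bot) = \<Union> (groups ` set xs)" for xs
    by (induction xs) auto
  ultimately show "sat V R w (Disjs S) = (\<exists>\<phi>\<in>S. sat V R w \<phi>)" "wf_fm (Disjs S) = (\<forall>\<phi>\<in>S. wf_fm \<phi>)"
    "vars (Disjs S) = \<Union> (vars ` S)" "groups (Disjs S) = \<Union> (groups ` S)"
    unfolding Disjs_def by metis+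
qed

definition literals :: "'p set \<Rightarrow> 'p set \<Rightarrow> ('p, 'agt) fm" where
  "literals Vs S = Conjs ((\<lambda>p. if p \<in> S then Atom p else Neg (Atom p)) ` Vs)"

text \<open>The cover modality \<open>\<nabla>\<^sub>G T\<close> of coalgebraic modal logic.\<close>

definition nabla :: "'agt set \<Rightarrow> ('p, 'agt) fm set \<Rightarrow> ('p, 'agt) fm" where
  "nabla G T = Conj (Conjs ((\<lambda>\<phi>. Neg (Dk G (Neg \<phi>))) ` T)) (Dk G (Disjs T))"

lemma literals_simps:
  assumes "finite Vs"
  shows "sat V R y (literals Vs S) = (\<forall>p\<in>Vs. (p \<in> S) = V y p)"
    "wf_fm (literals Vs S)" "vars (literals Vs S) \<subseteq> Vs" "groups (literals Vs S) = {}"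
proof -
  let ?lit = "\<lambda>p. if p \<in> S then Atom p else Neg (Atom p)"
  have "sat V R y (literals Vs S) = (\<forall>\<phi>\<in>?lit ` Vs. sat V R y \<phi>)"
    unfolding literals_def using assms by (rule Conjs_simps(1)[OF finite_imageI])
  also have "\<dots> = (\<forall>p\<in>Vs. sat V R y (?lit p))" by (simp only: Ball_image_comp comp_def)
  also have "\<dots> = (\<forall>p\<in>Vs. (p \<in> S) = V y p)" by (intro ball_cong refl) simp
  finally show "sat V R y (literals Vs S) = (\<forall>p\<in>Vs. (p \<in> S) = V y p)" .
  show "wf_fm (literals Vs S)" "vars (literals Vs S) \<subseteq> Vs" "groups (literals Vs S) = {}"
    using assms by (auto simp: literals_def Conjs_simps)
qed

lemma nabla_simps:
  assumes "finite T"
  shows "sat V R w (nabla G T) =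
      ((\<forall>\<phi>\<in>T. \<exists>v. R G w v \<and> sat V R v \<phi>) \<and> (\<forall>v. R G w v \<longrightarrow> (\<exists>\<phi>\<in>T. sat V R v \<phi>)))"
    "wf_fm (nabla G T) = (G \<noteq> {} \<and> (\<forall>\<phi>\<in>T. wf_fm \<phi>))"
    "vars (nabla G T) = \<Union> (vars ` T)" "groups (nabla G T) = insert G (\<Union> (groups ` T))"
  using assms by (auto simp: nabla_def Conjs_simps Disjs_simps)

primrec char_fm :: "nat \<Rightarrow> 'p set \<Rightarrow> 'agt set set \<Rightarrow> ('a \<Rightarrow> 'p \<Rightarrow> bool) \<Rightarrow> ('agt set \<Rightarrow> 'a \<Rightarrow> 'a \<Rightarrow> bool) \<Rightarrow>
    'a \<Rightarrow> ('p, 'agt) fm" where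
  "char_fm 0 Vs Gs V R x = literals Vs {p \<in> Vs. V x p}"
| "char_fm (Suc n) Vs Gs V R x = Conj (literals Vs {p \<in> Vs. V x p})
     (Conjs ((\<lambda>G. nabla G (char_fm n Vs Gs V R ` {x'. R G x x'})) ` Gs))"

lemma finite_range_char_fm:
  assumes "finite Vs" and "finite Gs"
  shows "finite (range (char_fm n Vs Gs V R))"
proof (induction n)
  case 0
  have "range (char_fm 0 Vs Gs V R) \<subseteq> literals Vs ` Pow Vs" by auto
  then show ?case using assms(1) finite_subset by blast
next
  case (Suc n)
  define F where "F = (\<lambda>(S, T). Conj (literals Vs S) (Conjs ((\<lambda>G. nabla G (T G)) ` Gs)))"
  have "range (char_fm (Suc n) Vs Gs V R) \<subseteq> F ` (Pow Vs \<times> (Gs \<rightarrow>\<^sub>E Pow (range (char_fm n Vs Gs V R))))"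
  proof
    fix \<phi> assume "\<phi> \<in> range (char_fm (Suc n) Vs Gs V R)"
    then obtain x where \<phi>: "\<phi> = char_fm (Suc n) Vs Gs V R x" by blast
    let ?T = "restrict (\<lambda>G. char_fm n Vs Gs V R ` {x'. R G x x'}) Gs"
    have "\<phi> = F ({p \<in> Vs. V x p}, ?T)"
      unfolding \<phi> F_def by (auto intro!: arg_cong[where f = Conjs] image_cong)
    moreover have "({p \<in> Vs. V x p}, ?T) \<in> Pow Vs \<times> (Gs \<rightarrow>\<^sub>E Pow (range (char_fm n Vs Gs V R)))"
      by auto
    ultimately show "\<phi> \<in> F ` (Pow Vs \<times> (Gs \<rightarrow>\<^sub>E Pow (range (char_fm n Vs Gs V R))))" by blast
  qed
  moreover have "finite (Pow Vs \<times> (Gs \<rightarrow>\<^sub>E Pow (range (char_fm n Vs Gs V R))))"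
    using assms Suc by (simp add: finite_PiE)
  ultimately show ?case using finite_subset by blast
qed

lemma char_fm_language:
  assumes "finite Vs" and "finite Gs" and "\<forall>G\<in>Gs. G \<noteq> {}"
  shows "wf_fm (char_fm n Vs Gs V R x) \<and> vars (char_fm n Vs Gs V R x) \<subseteq> Vs \<and> groups (char_fm n Vs Gs V R x) \<subseteq> Gs"
proof (induction n arbitrary: x)
  case 0
  show ?case by (simp add: literals_simps(2-4)[OF assms(1)])
next
  case (Suc n)
  let ?T = "\<lambda>G. char_fm n Vs Gs V R ` {x'. R G x x'}"
  have fin: "finite (?T G)" for G
    by (rule finite_subset[OF _ finite_range_char_fm[OF assms(1,2)]]) auto
  have "wf_fm (nabla G (?T G)) \<and> vars (nabla G (?T G)) \<subseteq> Vs \<and> groups (nabla G (?T G)) \<subseteq> Gs"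
    if "G \<in> Gs" for G
    using Suc.IH that assms(3) by (auto simp: nabla_simps[OF fin])
  then show ?case
    using assms(2) by (auto simp: Conjs_simps literals_simps(2-4)[OF assms(1)])
qed

theorem sat_char_fm:
  assumes "finite Vs" and "finite Gs"
  shows "sat V2 R2 y (char_fm n Vs Gs V R x) = bisim_upto Vs Gs n V R x V2 R2 y"
proof (induction n arbitrary: x y)
  case 0
  then show ?case by (simp add: literals_simps[OF assms(1)])
next
  case (Suc n)
  have "finite (char_fm n Vs Gs V R ` {x'. R G x x'})" for G
    by (rule finite_subset[OF _ finite_range_char_fm[OF assms]]) auto
  then show ?case
    using assms Suc by (simp add: literals_simps Conjs_simps nabla_simps)
qed

section \<open>Products of models\<close>

definition groups_avoiding :: "'agt set \<Rightarrow> 'agt set set" where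
  "groups_avoiding B = {G. G \<noteq> {} \<and> G \<inter> B = {}}"

datatype ('m, 'n) prod_world = Prod 'm 'n nat | InM 'm | InN 'n

text \<open>A world \<open>Prod x y n\<close> of the product pairs worlds of \<open>M\<close> and \<open>N\<close> that are \<open>n\<close>-bisimilar for
  the variables \<open>V0\<close> and the groups avoiding \<open>B\<close>; it takes the variables in \<open>Q\<close> from \<open>y\<close> and all
  others from \<open>x\<close>. A \<open>G\<close>-step moves \<open>y\<close> along \<open>G\<close> in \<open>N\<close>, moves \<open>x\<close> along \<open>G - B\<close> in \<open>M\<close> (freely if
  \<open>G \<subseteq> B\<close>) and decreases \<open>n\<close>; for \<open>KT\<^sub>D\<close> a world also sees itself. Once \<open>n = 0\<close> only \<open>M\<close> is
  followed (\<open>InM\<close>), and along groups inside \<open>B\<close> only \<open>N\<close> (\<open>InN\<close>). Hence \<open>Prod x y n\<close> is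
  \<open>n\<close>-bisimilar to \<open>y\<close> in the full language and fully bisimilar to \<open>x\<close> in the language without \<open>Q\<close>
  and \<open>B\<close>.\<close>

locale product_model =
  fixes L :: logic
    and DM :: "'m set" and RM :: "'agt set \<Rightarrow> 'm \<Rightarrow> 'm \<Rightarrow> bool" and VM :: "'m \<Rightarrow> 'p \<Rightarrow> bool"
    and DN :: "'n set" and RN :: "'agt set \<Rightarrow> 'n \<Rightarrow> 'n \<Rightarrow> bool" and VN :: "'n \<Rightarrow> 'p \<Rightarrow> bool"
    and V0 :: "'p set" and Q :: "'p set" and B :: "'agt set"
  assumes frame_M: "frame L DM RM" and frame_N: "frame L DN RN"
begin

definition M_step :: "'agt set \<Rightarrow> 'm \<Rightarrow> 'm \<Rightarrow> bool" where
  "M_step G x x' \<longleftrightarrow> x' \<in> DM \<and> (G \<subseteq> B \<or> RM (G - B) x x')"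

fun prod_val :: "('m, 'n) prod_world \<Rightarrow> 'p \<Rightarrow> bool" where
  "prod_val (Prod x y n) p = (if p \<in> Q then VN y p else VM x p)"
| "prod_val (InM x) p = VM x p"
| "prod_val (InN y) p = VN y p"

fun prod_rel :: "'agt set \<Rightarrow> ('m, 'n) prod_world \<Rightarrow> ('m, 'n) prod_world \<Rightarrow> bool" where
  "prod_rel G (Prod x y n) (Prod x' y' m) = (RN G y y' \<and> y' \<in> DN \<and> M_step G x x' \<and>
      (Suc m = n \<and> bisim_upto V0 (groups_avoiding B) m VM RM x' VN RN y' \<or> L = LKT \<and> x' = x \<and> y' = y \<and> m = n))"
| "prod_rel G (Prod x y n) (InM x') = (n = 0 \<and> M_step G x x')"
| "prod_rel G (Prod x y n) (InN y') = (n \<noteq> 0 \<and> G \<subseteq> B \<and> RN G y y')"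
| "prod_rel G (InM x) (InM x') = M_step G x x'"
| "prod_rel G (InN y) (InN y') = RN G y y'"
| "prod_rel G (InM x) (Prod x' y' m) = False"
| "prod_rel G (InM x) (InN y') = False"
| "prod_rel G (InN y) (Prod x' y' m) = False"
| "prod_rel G (InN y) (InM x') = False"

definition prod_worlds :: "('m, 'n) prod_world set" where
  "prod_worlds = {Prod x y n | x y n. x \<in> DM \<and> y \<in> DN \<and> bisim_upto V0 (groups_avoiding B) n VM RM x VN RN y}
     \<union> InM ` DM \<union> InN ` DN"

lemma prod_worlds_iff [simp]:
  "Prod x y n \<in> prod_worlds \<longleftrightarrow> x \<in> DM \<and> y \<in> DN \<and> bisim_upto V0 (groups_avoiding B) n VM RM x VN RN y"
  "InM x \<in> prod_worlds \<longleftrightarrow> x \<in> DM" "InN y \<in> prod_worlds \<longleftrightarrow> y \<in> DN"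
  unfolding prod_worlds_def by auto

lemma M_step_antimono: "x \<in> DM \<Longrightarrow> H \<subseteq> G \<Longrightarrow> M_step G x x' \<Longrightarrow> M_step H x x'"
  unfolding M_step_def using frame_antimono[OF frame_M, of x "H - B" "G - B"] by blast

lemma prod_closed: "w \<in> prod_worlds \<Longrightarrow> prod_rel G w v \<Longrightarrow> v \<in> prod_worlds"
  by (cases w; cases v) (auto simp: M_step_def intro: frame_closed[OF frame_N])

lemma prod_antimono: "w \<in> prod_worlds \<Longrightarrow> H \<subseteq> G \<Longrightarrow> H \<noteq> {} \<Longrightarrow> prod_rel G w v \<Longrightarrow> prod_rel H w v"
  by (cases w; cases v) (auto intro: M_step_antimono frame_antimono[OF frame_N])

lemma M_step_avoiding: "G \<in> groups_avoiding B \<Longrightarrow> M_step G x x' \<longleftrightarrow> x' \<in> DM \<and> RM G x x'"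
proof -
  assume "G \<in> groups_avoiding B"
  then have "\<not> G \<subseteq> B" and "G - B = G" by (auto simp: groups_avoiding_def)
  then show ?thesis unfolding M_step_def by simp
qed

lemma prod_lift_N:
  assumes w: "Prod x y n \<in> prod_worlds" and "n \<noteq> 0" and "G \<noteq> {}" and R: "RN G y y'"
  shows "\<exists>v. prod_rel G (Prod x y n) v \<and> v \<in> prod_worlds \<and> (v = InN y' \<or> (\<exists>x'. v = Prod x' y' (n - 1)))"
proof -
  obtain m where n: "n = Suc m" using \<open>n \<noteq> 0\<close> by (cases n) auto
  have x: "x \<in> DM" and y: "y \<in> DN" and e: "bisim_upto V0 (groups_avoiding B) n VM RM x VN RN y"
    using w by simp_all
  have y': "y' \<in> DN" using frame_closed[OF frame_N y R] .
  show ?thesis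
  proof (cases "G \<subseteq> B")
    case True
    then show ?thesis using R n y' by (intro exI[of _ "InN y'"]) simp
  next
    case False
    then have GB: "G - B \<in> groups_avoiding B" by (auto simp: groups_avoiding_def)
    have "RN (G - B) y y'" using frame_antimono[OF frame_N y _ _ R] False by blast
    moreover have "\<forall>y'. RN (G - B) y y' \<longrightarrow> (\<exists>x'. RM (G - B) x x' \<and> bisim_upto V0 (groups_avoiding B) m VM RM x' VN RN y')"
      using e n GB by simp
    ultimately obtain x' where Rx: "RM (G - B) x x'" and e': "bisim_upto V0 (groups_avoiding B) m VM RM x' VN RN y'"
      by blast
    have "x' \<in> DM" using frame_closed[OF frame_M x Rx] .
    then show ?thesis
      using R Rx e' n y' by (intro exI[of _ "Prod x' y' m"]) (simp add: M_step_def)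
  qed
qed

lemma prod_lift_M:
  assumes w: "Prod x y n \<in> prod_worlds" and G: "G \<in> groups_avoiding B" and R: "RM G x x'"
  shows "\<exists>v. prod_rel G (Prod x y n) v \<and> v \<in> prod_worlds \<and> (v = InM x' \<or> (\<exists>y'. v = Prod x' y' (n - 1)))"
proof -
  have x: "x \<in> DM" and y: "y \<in> DN" and e: "bisim_upto V0 (groups_avoiding B) n VM RM x VN RN y"
    using w by simp_all
  have x': "x' \<in> DM" using frame_closed[OF frame_M x R] .
  show ?thesis
  proof (cases n)
    case 0
    then show ?thesis using R x' M_step_avoiding[OF G] by (intro exI[of _ "InM x'"]) simp
  next
    case (Suc m)
    then have "\<forall>x'. RM G x x' \<longrightarrow> (\<exists>y'. RN G y y' \<and> bisim_upto V0 (groups_avoiding B) m VM RM x' VN RN y')"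
      using e G by simp
    then obtain y' where Ry: "RN G y y'" and e': "bisim_upto V0 (groups_avoiding B) m VM RM x' VN RN y'"
      using R by blast
    have "y' \<in> DN" using frame_closed[OF frame_N y Ry] .
    then show ?thesis
      using Suc R Ry e' x' M_step_avoiding[OF G] by (intro exI[of _ "Prod x' y' m"]) simp
  qed
qed

lemma prod_serial:
  assumes "L = LKD" and w: "w \<in> prod_worlds"
  shows "\<exists>v. prod_rel {a} w v"
proof -
  have serial_M: "\<exists>x'. RM {a} x x'" if "x \<in> DM" for x
    using frame_serial frame_M that \<open>L = LKD\<close> by metis
  have serial_N: "\<exists>y'. RN {a} y y'" if "y \<in> DN" for y
    using frame_serial frame_N that \<open>L = LKD\<close> by metis
  have serial_M_step: "\<exists>x'. M_step {a} x x'" if x: "x \<in> DM" for x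
  proof (cases "a \<in> B")
    case True
    then show ?thesis using x unfolding M_step_def by blast
  next
    case False
    obtain x' where "RM {a} x x'" using serial_M[OF x] by blast
    then show ?thesis
      using False frame_closed[OF frame_M x] unfolding M_step_def by (intro exI[of _ x']) (auto simp: insert_Diff_if)
  qed
  show ?thesis
  proof (cases w)
    case (Prod x y n)
    show ?thesis
    proof (cases "n = 0")
      case True
      obtain x' where "M_step {a} x x'" using serial_M_step w Prod by auto
      then show ?thesis using Prod True by (intro exI[of _ "InM x'"]) simp
    next
      case False
      show ?thesis
      proof (cases "a \<in> B")
        case True
        obtain y' where "RN {a} y y'" using serial_N w Prod by auto
        then show ?thesis using prod_lift_N[of x y n "{a}" y'] w Prod False by auto
      next
        case False
        then have G: "{a} \<in> groups_avoiding B" by (simp add: groups_avoiding_def)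
        obtain x' where "RM {a} x x'" using serial_M w Prod by auto
        then show ?thesis using prod_lift_M[OF _ G] w Prod by blast
      qed
    qed
  next
    case (InM x)
    obtain x' where "M_step {a} x x'" using serial_M_step w InM by auto
    then show ?thesis using InM by (intro exI[of _ "InM x'"]) simp
  next
    case (InN y)
    obtain y' where "RN {a} y y'" using serial_N w InN by auto
    then show ?thesis using InN by (intro exI[of _ "InN y'"]) simp
  qed
qed

lemma prod_refl:
  assumes "L = LKT" and "w \<in> prod_worlds" and "G \<noteq> {}"
  shows "prod_rel G w w"
proof -
  have M: "M_step G x x" if "x \<in> DM" for x
    using frame_refl[of DM RM x "G - B"] frame_M assms(1) that unfolding M_step_def by auto
  have N: "RN G y y" if "y \<in> DN" for y
    using frame_refl[of DN RN y G] frame_N assms that by auto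
  show ?thesis
  proof (cases w)
    case (Prod x y n)
    with assms(2) have "x \<in> DM" "y \<in> DN" by simp_all
    then show ?thesis
      unfolding Prod prod_rel.simps using M N assms(1) by blast
  qed (use assms(2) M N in simp_all)
qed

lemma frame_prod: "frame L prod_worlds prod_rel"
  unfolding frame_def
proof (intro conjI allI impI)
  show "\<And>G w v. w \<in> prod_worlds \<Longrightarrow> prod_rel G w v \<Longrightarrow> v \<in> prod_worlds" by (rule prod_closed)
  show "\<And>G H w v. w \<in> prod_worlds \<Longrightarrow> H \<subseteq> G \<Longrightarrow> H \<noteq> {} \<Longrightarrow> prod_rel G w v \<Longrightarrow> prod_rel H w v"
    by (rule prod_antimono)
  show "\<And>a w. L = LKD \<Longrightarrow> w \<in> prod_worlds \<Longrightarrow> \<exists>v. prod_rel {a} w v" by (rule prod_serial)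
  show "\<And>G w. L = LKT \<Longrightarrow> w \<in> prod_worlds \<Longrightarrow> G \<noteq> {} \<Longrightarrow> prod_rel G w w" by (rule prod_refl)
qed

lemma bisim_InN: "y \<in> DN \<Longrightarrow> bisim_upto Vs Gs k prod_val prod_rel (InN y) VN RN y"
proof (induction k arbitrary: y)
  case (Suc k)
  have IH: "RN G y y' \<Longrightarrow> bisim_upto Vs Gs k prod_val prod_rel (InN y') VN RN y'" for G y'
    using Suc frame_closed[OF frame_N] by blast
  have "prod_rel G (InN y) v \<longleftrightarrow> (\<exists>y'. v = InN y' \<and> RN G y y')" for G v
    by (cases v) auto
  then show ?case using IH by auto
qed simp

lemma bisim_InM: "x \<in> DM \<Longrightarrow> bisim_upto (- Q) (groups_avoiding B) k prod_val prod_rel (InM x) VM RM x"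
proof (induction k arbitrary: x)
  case (Suc k)
  have IH: "x' \<in> DM \<Longrightarrow> bisim_upto (- Q) (groups_avoiding B) k prod_val prod_rel (InM x') VM RM x'" for x'
    using Suc by blast
  have step: "prod_rel G (InM x) v \<longleftrightarrow> (\<exists>x'. v = InM x' \<and> x' \<in> DM \<and> RM G x x')"
    if "G \<in> groups_avoiding B" for G v
    using M_step_avoiding[OF that] by (cases v) auto
  have "\<exists>v. prod_rel G (InM x) v \<and> bisim_upto (- Q) (groups_avoiding B) k prod_val prod_rel v VM RM x'"
    if "G \<in> groups_avoiding B" and "RM G x x'" for G x'
    using step[OF that(1), of "InM x'"] IH that(2) frame_closed[OF frame_M Suc.prems that(2)] by blast
  then show ?case using IH step by auto
qed simp

lemma prod_val_Prod:
  assumes "Prod x y n \<in> prod_worlds" and "p \<in> V0 \<union> Q"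
  shows "prod_val (Prod x y n) p = VN y p"
proof (cases "p \<in> Q")
  case False
  then show ?thesis using bisim_upto_val[of V0 "groups_avoiding B" n VM RM x VN RN y p] assms by simp
qed simp

lemma bisim_Prod_N:
  "Prod x y n \<in> prod_worlds \<Longrightarrow> k \<le> n \<Longrightarrow>
   bisim_upto (V0 \<union> Q) {G. G \<noteq> {}} k prod_val prod_rel (Prod x y n) VN RN y"
proof (induction k arbitrary: x y n)
  case 0
  show ?case unfolding bisim_upto.simps using prod_val_Prod[OF 0(1)] by blast
next
  case (Suc k)
  have y: "y \<in> DN" using Suc.prems(1) by simp
  have forward: "\<exists>y'. RN G y y' \<and> bisim_upto (V0 \<union> Q) {G. G \<noteq> {}} k prod_val prod_rel v VN RN y'"
    if R: "prod_rel G (Prod x y n) v" for G v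
  proof (cases v)
    case (Prod x' y' m)
    then have "RN G y y'" "k \<le> m" using R Suc.prems(2) by auto
    then show ?thesis using Suc.IH prod_closed[OF Suc.prems(1) R] Prod by blast
  next
    case (InM x')
    then show ?thesis using R Suc.prems(2) by simp
  next
    case (InN y')
    then show ?thesis using R bisim_InN frame_closed[OF frame_N y] by auto
  qed
  have backward: "\<exists>v. prod_rel G (Prod x y n) v \<and> bisim_upto (V0 \<union> Q) {G. G \<noteq> {}} k prod_val prod_rel v VN RN y'"
    if G: "G \<noteq> {}" and R: "RN G y y'" for G y'
  proof -
    obtain v where v: "prod_rel G (Prod x y n) v" "v \<in> prod_worlds" "v = InN y' \<or> (\<exists>x'. v = Prod x' y' (n - 1))"
      using prod_lift_N[OF Suc.prems(1) _ G R] Suc.prems(2) by auto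
    from v(3) have "bisim_upto (V0 \<union> Q) {G. G \<noteq> {}} k prod_val prod_rel v VN RN y'"
      using bisim_InN Suc.IH v(2) Suc.prems(2) by auto
    with v(1) show ?thesis by blast
  qed
  show ?case
    unfolding bisim_upto.simps using prod_val_Prod[OF Suc.prems(1)] forward backward by blast
qed

lemma bisim_Prod_M:
  "Prod x y n \<in> prod_worlds \<Longrightarrow> bisim_upto (- Q) (groups_avoiding B) k prod_val prod_rel (Prod x y n) VM RM x"
proof (induction k arbitrary: x y n)
  case (Suc k)
  have forward: "\<exists>x'. RM G x x' \<and> bisim_upto (- Q) (groups_avoiding B) k prod_val prod_rel v VM RM x'"
    if G: "G \<in> groups_avoiding B" and R: "prod_rel G (Prod x y n) v" for G v
  proof (cases v)
    case (Prod x' y' m)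
    then have "RM G x x'" using R M_step_avoiding[OF G] by simp
    then show ?thesis using Suc.IH prod_closed[OF Suc.prems R] Prod by blast
  next
    case (InM x')
    then have "RM G x x'" "x' \<in> DM" using R M_step_avoiding[OF G] by simp_all
    then show ?thesis using bisim_InM InM by blast
  next
    case (InN y')
    then show ?thesis using R G by (auto simp: groups_avoiding_def)
  qed
  have backward: "\<exists>v. prod_rel G (Prod x y n) v \<and> bisim_upto (- Q) (groups_avoiding B) k prod_val prod_rel v VM RM x'"
    if G: "G \<in> groups_avoiding B" and R: "RM G x x'" for G x'
  proof -
    obtain v where v: "prod_rel G (Prod x y n) v" "v \<in> prod_worlds" "v = InM x' \<or> (\<exists>y'. v = Prod x' y' (n - 1))"
      using prod_lift_M[OF Suc.prems G R] by blast
    from v(3) have "bisim_upto (- Q) (groups_avoiding B) k prod_val prod_rel v VM RM x'"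
      using bisim_InM Suc.IH v(2) by auto
    with v(1) show ?thesis by blast
  qed
  show ?case
    using forward backward by simp
qed simp

theorem product_transfer:
  assumes "x \<in> DM" "y \<in> DN" "bisim_upto V0 (groups_avoiding B) d VM RM x VN RN y"
    and "wf_fm \<alpha>" "vars \<alpha> \<subseteq> V0 \<union> Q" "modal_depth \<alpha> \<le> d" "sat VN RN y \<alpha>"
    and "wf_fm \<beta>" "vars \<beta> \<inter> Q = {}" "agts \<beta> \<inter> B = {}" "derivable L {#\<alpha>#} {#\<beta>#}"
  shows "sat VM RM x \<beta>"
proof -
  let ?u = "Prod x y d"
  have u: "?u \<in> prod_worlds" using assms(1-3) by simp
  have "groups \<alpha> \<subseteq> {G. G \<noteq> {}}" using wf_fm_groups_nonempty[OF assms(4)] by blast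
  then have "sat prod_val prod_rel ?u \<alpha>"
    using sat_bisim_upto_invariant[OF bisim_Prod_N[OF u order_refl] assms(5)] assms(6,7) by simp
  then have "sat prod_val prod_rel ?u \<beta>"
    using soundness[OF assms(11) frame_prod _ u, of prod_val] assms(4,8) by (simp add: wf_seq_def seq_true_def)
  moreover have "groups \<beta> \<subseteq> groups_avoiding B"
    using wf_fm_groups_nonempty[OF assms(8)] assms(10) unfolding agts_eq_Union_groups groups_avoiding_def by blast
  moreover have "vars \<beta> \<subseteq> - Q" using assms(9) by blast
  ultimately show ?thesis
    using sat_bisim_upto_invariant[OF bisim_Prod_M[OF u, of "modal_depth \<beta>"]] by simp
qed

end

section \<open>Uniform interpolants\<close>

definition avoids :: "'p set \<Rightarrow> 'agt set \<Rightarrow> ('p, 'agt) fm \<Rightarrow> bool" where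
  "avoids Q B \<beta> \<longleftrightarrow> wf_fm \<beta> \<and> vars \<beta> \<inter> Q = {} \<and> agts \<beta> \<inter> B = {}"

definition post_disjuncts :: "logic \<Rightarrow> 'p set \<Rightarrow> 'agt set \<Rightarrow> ('p, 'agt) fm \<Rightarrow> ('p, 'agt) fm set" where
  "post_disjuncts L Q B \<alpha> =
     char_fm (modal_depth \<alpha>) (vars \<alpha> - Q) (groups_avoiding B) canon_val (canon_rel L)
       ` {w \<in> canon_worlds L. canon_sat L w \<alpha>}"

definition post_interpolant :: "logic \<Rightarrow> 'p set \<Rightarrow> 'agt set \<Rightarrow> ('p, 'agt) fm \<Rightarrow> ('p, 'agt) fm" where
  "post_interpolant L Q B \<alpha> = Disjs (post_disjuncts L Q B \<alpha>)"

definition pre_interpolant :: "logic \<Rightarrow> 'p set \<Rightarrow> 'agt set \<Rightarrow> ('p, 'agt) fm \<Rightarrow> ('p, 'agt) fm" where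
  "pre_interpolant L Q B \<alpha> = Neg (post_interpolant L Q B (Neg \<alpha>))"

lemma finite_groups_avoiding: "finite (groups_avoiding (B :: 'agt :: finite set))"
  by (rule finite_subset[of _ UNIV]) simp_all

lemma post_disjuncts:
  fixes \<alpha> :: "('p, 'agt :: finite) fm"
  shows "finite (post_disjuncts L Q B \<alpha>)"
    and "\<phi> \<in> post_disjuncts L Q B \<alpha> \<Longrightarrow> wf_fm \<phi> \<and> vars \<phi> \<subseteq> vars \<alpha> - Q \<and> groups \<phi> \<subseteq> groups_avoiding B"
proof -
  have fin: "finite (vars \<alpha> - Q)" "finite (groups_avoiding B)"
    using finite_vars finite_groups_avoiding by auto
  have ne: "\<forall>G\<in>groups_avoiding B. G \<noteq> {}" by (simp add: groups_avoiding_def)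
  show "finite (post_disjuncts L Q B \<alpha>)" unfolding post_disjuncts_def
    by (rule finite_subset[OF _ finite_range_char_fm[OF fin]]) auto
  assume "\<phi> \<in> post_disjuncts L Q B \<alpha>"
  then obtain w where "\<phi> = char_fm (modal_depth \<alpha>) (vars \<alpha> - Q) (groups_avoiding B) canon_val (canon_rel L) w"
    unfolding post_disjuncts_def by blast
  then show "wf_fm \<phi> \<and> vars \<phi> \<subseteq> vars \<alpha> - Q \<and> groups \<phi> \<subseteq> groups_avoiding B"
    using char_fm_language[OF fin ne] by simp
qed

lemma post_interpolant_avoids: "avoids Q B (post_interpolant L Q B (\<alpha> :: ('p, 'agt :: finite) fm))"
  unfolding avoids_def post_interpolant_def Disjs_simps[OF post_disjuncts(1)] agts_eq_Union_groups
  using post_disjuncts(2) by (fastforce simp: groups_avoiding_def)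

lemma derivable_post_interpolant:
  fixes \<alpha> :: "('p, 'agt :: finite) fm"
  assumes "wf_fm \<alpha>"
  shows "derivable L {#\<alpha>#} {#post_interpolant L Q B \<alpha>#}"
proof -
  have "canon_sat L w (post_interpolant L Q B \<alpha>)" if "w \<in> canon_worlds L" "canon_sat L w \<alpha>" for w
  proof -
    let ?\<chi> = "char_fm (modal_depth \<alpha>) (vars \<alpha> - Q) (groups_avoiding B) canon_val (canon_rel L) w"
    have "canon_sat L w ?\<chi>"
      by (simp add: sat_char_fm finite_vars finite_groups_avoiding bisim_upto_refl)
    moreover have "?\<chi> \<in> post_disjuncts L Q B \<alpha>" using that unfolding post_disjuncts_def by blast
    ultimately show ?thesis
      unfolding post_interpolant_def Disjs_simps(1)[OF post_disjuncts(1)] by blast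
  qed
  moreover have "wf_fm (post_interpolant L Q B \<alpha>)"
    using post_interpolant_avoids unfolding avoids_def by blast
  ultimately show ?thesis using assms by (simp add: derivable_iff_canon_valid)
qed

lemma post_interpolant_least:
  fixes \<alpha> \<beta> :: "('p, 'agt :: finite) fm"
  assumes "wf_fm \<alpha>" and "avoids Q B \<beta>" and "derivable L {#\<alpha>#} {#\<beta>#}"
  shows "derivable L {#post_interpolant L Q B \<alpha>#} {#\<beta>#}"
proof -
  interpret product_model L "canon_worlds L" "canon_rel L" canon_val "canon_worlds L" "canon_rel L" canon_val
    "vars \<alpha> - Q" Q B
    using frame_canon by unfold_locales
  have "canon_sat L w \<beta>" if w: "w \<in> canon_worlds L" and I: "canon_sat L w (post_interpolant L Q B \<alpha>)" for w
  proof -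
    obtain v where v: "v \<in> canon_worlds L" "canon_sat L v \<alpha>"
      and "canon_sat L w (char_fm (modal_depth \<alpha>) (vars \<alpha> - Q) (groups_avoiding B) canon_val (canon_rel L) v)"
      using I unfolding post_interpolant_def Disjs_simps(1)[OF post_disjuncts(1)]
      unfolding post_disjuncts_def by blast
    then have "bisim_upto (vars \<alpha> - Q) (groups_avoiding B) (modal_depth \<alpha>) canon_val (canon_rel L) v
        canon_val (canon_rel L) w"
      by (simp add: sat_char_fm finite_vars finite_groups_avoiding)
    then show ?thesis
      using product_transfer[OF w v(1) bisim_upto_sym assms(1) _ order_refl v(2)] assms(2,3)
      unfolding avoids_def by auto
  qed
  moreover have "wf_fm (post_interpolant L Q B \<alpha>)" "wf_fm \<beta>"
    using post_interpolant_avoids assms(2) unfolding avoids_def by blast+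
  ultimately show ?thesis by (simp add: derivable_iff_canon_valid)
qed

lemma derivable_Neg_duality:
  assumes "wf_fm a" and "wf_fm b"
  shows "derivable L {#Neg b#} {#Neg a#} \<longleftrightarrow> derivable L {#a#} {#b#}"
    and "derivable L {#Neg a#} {#b#} \<longleftrightarrow> derivable L {#Neg b#} {#a#}"
    and "derivable L {#a#} {#Neg b#} \<longleftrightarrow> derivable L {#b#} {#Neg a#}"
  using assms by (auto simp: derivable_iff_canon_valid)

lemma pre_interpolant_avoids: "avoids Q B (pre_interpolant L Q B (\<alpha> :: ('p, 'agt :: finite) fm))"
  using post_interpolant_avoids unfolding pre_interpolant_def avoids_def by simp

lemma derivable_pre_interpolant:
  fixes \<alpha> :: "('p, 'agt :: finite) fm"
  assumes "wf_fm \<alpha>"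
  shows "derivable L {#pre_interpolant L Q B \<alpha>#} {#\<alpha>#}"
proof -
  let ?J = "post_interpolant L Q B (Neg \<alpha>)"
  have "wf_fm ?J" using post_interpolant_avoids unfolding avoids_def by blast
  moreover have "derivable L {#Neg \<alpha>#} {#?J#}"
    using derivable_post_interpolant[of "Neg \<alpha>"] assms by simp
  ultimately show ?thesis
    unfolding pre_interpolant_def using derivable_Neg_duality(2)[OF assms] by blast
qed

lemma pre_interpolant_greatest:
  fixes \<alpha> \<beta> :: "('p, 'agt :: finite) fm"
  assumes "wf_fm \<alpha>" and "avoids Q B \<beta>" and "derivable L {#\<beta>#} {#\<alpha>#}"
  shows "derivable L {#\<beta>#} {#pre_interpolant L Q B \<alpha>#}"
proof -
  let ?J = "post_interpolant L Q B (Neg \<alpha>)"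
  have "wf_fm \<beta>" "wf_fm ?J" "avoids Q B (Neg \<beta>)"
    using assms(2) post_interpolant_avoids unfolding avoids_def by auto
  moreover have "derivable L {#Neg \<alpha>#} {#Neg \<beta>#}"
    using assms(1,3) \<open>wf_fm \<beta>\<close> derivable_Neg_duality(1) by blast
  ultimately have "derivable L {#?J#} {#Neg \<beta>#}"
    using post_interpolant_least[of "Neg \<alpha>"] assms(1) by simp
  then show ?thesis
    unfolding pre_interpolant_def using derivable_Neg_duality(3) \<open>wf_fm \<beta>\<close> \<open>wf_fm ?J\<close> by blast
qed

theorem corollary6p21:
  fixes L :: logic
    and \<alpha> :: "('p :: countable, 'agt :: finite) fm"
    and Q :: "'p set" and B :: "'agt set"
  assumes "wf_fm \<alpha>" and "finite Q" and "Q \<subseteq> vars \<alpha>"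
    and "finite B" and "B \<subseteq> agts \<alpha>"
  shows "(\<exists>I. wf_fm I \<and> vars I \<inter> Q = {} \<and> agts I \<inter> B = {}
              \<and> derivable L {#I#} {#\<alpha>#}
              \<and> (\<forall>\<beta>. wf_fm \<beta> \<and> vars \<beta> \<inter> Q = {} \<and> agts \<beta> \<inter> B = {}
                     \<and> derivable L {#\<beta>#} {#\<alpha>#} \<longrightarrow> derivable L {#\<beta>#} {#I#}))
       \<and> (\<exists>I. wf_fm I \<and> vars I \<inter> Q = {} \<and> agts I \<inter> B = {}
              \<and> derivable L {#\<alpha>#} {#I#}
              \<and> (\<forall>\<beta>. wf_fm \<beta> \<and> vars \<beta> \<inter> Q = {} \<and> agts \<beta> \<inter> B = {}
                     \<and> derivable L {#\<alpha>#} {#\<beta>#} \<longrightarrow> derivable L {#I#} {#\<beta>#}))"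
  using assms(1)
  by (intro conjI[OF exI[of _ "pre_interpolant L Q B \<alpha>"] exI[of _ "post_interpolant L Q B \<alpha>"]])
    (simp_all add: pre_interpolant_avoids[unfolded avoids_def] derivable_pre_interpolant
      pre_interpolant_greatest[unfolded avoids_def] post_interpolant_avoids[unfolded avoids_def]
      derivable_post_interpolant post_interpolant_least[unfolded avoids_def])

end
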